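(* Let $\mathbb{E}$ be a finitely complete category, $\Sigma$ a fibrational class of split epimorphisms, and suppose $\mathbb{E}$ is a $\Sigma$-Mal'tsev category. Let $(g,t)$ be any split epimorphism with $g\colon Y\to Z$. Let $g^*\colon \mathrm{Pt}_Z(\mathbb{E})\to\mathrm{Pt}_Y(\mathbb{E})$ be the base-change (pullback) functor along $g$ and $g^*_\Sigma\colon\Sigma_Z(\mathbb{E})\to\Sigma_Y(\mathbb{E})$ its restriction. Then: (a) (full faithfulness) for every object $A$ of $\Sigma_Z(\mathbb{E})$, every object $B$ of $\mathrm{Pt}_Z(\mathbb{E})$ and every morphism $h\colon g^*(A)\to g^*(B)$ in $\mathrm{Pt}_Y(\mathbb{E})$, there is a unique morphism $k\colon A\to B$ in $\mathrm{Pt}_Z(\mathbb{E})$ with $g^*(k)=h$; (b) (saturation on subobjects) $g^*$ preserves monomorphisms and, for every object $B$ of $\mathrm{Pt}_Z(\mathbb{E})$, induces a bijection between the subobjects of $B$ in $\mathrm{Pt}_Z(\mathbb{E})$ whose domain lies in $\Sigma_Z(\mathbb{E})$ and the subobjects of $g^*(B)$ in $\mathrm{Pt}_Y(\mathbb{E})$ whose domain lies in $\Sigma_Y(\mathbb{E})$.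
   Context: A split epimorphism is a pair $(f,s)$ with $fs=1$. $\mathrm{Pt}_Y(\mathbb{E})$ is the category of split epimorphisms with codomain $Y$ and morphisms commuting with the epimorphisms and the splittings; $\Sigma_Y(\mathbb{E})$ is its full subcategory of split epimorphisms in $\Sigma$. A class $\Sigma$ of split epimorphisms is fibrational if it contains all split epimorphisms $(f,s)$ with $f$ invertible and is stable under pullback along any morphism. A pair of morphisms with common codomain $W$ is jointly extremally epic if it factors jointly through no non-invertible monomorphism into $W$. $\mathbb{E}$ is $\Sigma$-Mal'tsev if for every split epimorphism $(f,s)\colon X\rightleftarrows Y$ in $\Sigma$ and every split epimorphism $(g,t)$ with $g\colon Y'\to Y$, letting $X'=Y'\times_YX$, $s'=(1_{Y'},sg)$, $\bar t=(tf,1_X)$, the pair $(s',\bar t)$ is jointly extremally epic. *)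

theory Defs
  imports Main
begin

text \<open>A category presented by a set of objects, hom-sets, composition
  (cmp C g f is g after f) and identities.\<close>
record ('o,'m) cat =
  Obj :: "'o set"
  Hom :: "'o \<Rightarrow> 'o \<Rightarrow> 'm set"
  cmp :: "'m \<Rightarrow> 'm \<Rightarrow> 'm"
  ide :: "'o \<Rightarrow> 'm"

definition category :: "('o,'m) cat \<Rightarrow> bool" where
  "category C \<longleftrightarrow>
    (\<forall>X Y. Hom C X Y \<noteq> {} \<longrightarrow> X \<in> Obj C \<and> Y \<in> Obj C) \<and>
    (\<forall>X\<in>Obj C. ide C X \<in> Hom C X X) \<and>
    (\<forall>X Y Z f g. f \<in> Hom C X Y \<longrightarrow> g \<in> Hom C Y Z \<longrightarrow> cmp C g f \<in> Hom C X Z) \<and>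
    (\<forall>X Y f. f \<in> Hom C X Y \<longrightarrow> cmp C (ide C Y) f = f \<and> cmp C f (ide C X) = f) \<and>
    (\<forall>W X Y Z f g h. f \<in> Hom C W X \<longrightarrow> g \<in> Hom C X Y \<longrightarrow> h \<in> Hom C Y Z \<longrightarrow>
        cmp C h (cmp C g f) = cmp C (cmp C h g) f)"

definition is_pullback :: "('o,'m) cat \<Rightarrow> 'o \<Rightarrow> 'o \<Rightarrow> 'o \<Rightarrow> 'm \<Rightarrow> 'm \<Rightarrow> 'o \<Rightarrow> 'm \<Rightarrow> 'm \<Rightarrow> bool" where
  "is_pullback C X Y Z f g P p1 p2 \<longleftrightarrow>
    f \<in> Hom C X Z \<and> g \<in> Hom C Y Z \<and> p1 \<in> Hom C P X \<and> p2 \<in> Hom C P Y \<and>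
    cmp C f p1 = cmp C g p2 \<and>
    (\<forall>Q q1 q2. q1 \<in> Hom C Q X \<longrightarrow> q2 \<in> Hom C Q Y \<longrightarrow> cmp C f q1 = cmp C g q2 \<longrightarrow>
       (\<exists>!u. u \<in> Hom C Q P \<and> cmp C p1 u = q1 \<and> cmp C p2 u = q2))"

definition terminal :: "('o,'m) cat \<Rightarrow> 'o \<Rightarrow> bool" where
  "terminal C T \<longleftrightarrow> T \<in> Obj C \<and> (\<forall>X\<in>Obj C. \<exists>!u. u \<in> Hom C X T)"

definition finitely_complete :: "('o,'m) cat \<Rightarrow> bool" where
  "finitely_complete C \<longleftrightarrow> category C \<and> (\<exists>T. terminal C T) \<and>
    (\<forall>X Y Z f g. f \<in> Hom C X Z \<longrightarrow> g \<in> Hom C Y Z \<longrightarrow>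
       (\<exists>P p1 p2. is_pullback C X Y Z f g P p1 p2))"

definition mono :: "('o,'m) cat \<Rightarrow> 'o \<Rightarrow> 'o \<Rightarrow> 'm \<Rightarrow> bool" where
  "mono C M W m \<longleftrightarrow> m \<in> Hom C M W \<and>
    (\<forall>A u v. u \<in> Hom C A M \<longrightarrow> v \<in> Hom C A M \<longrightarrow> cmp C m u = cmp C m v \<longrightarrow> u = v)"

definition invertible :: "('o,'m) cat \<Rightarrow> 'o \<Rightarrow> 'o \<Rightarrow> 'm \<Rightarrow> bool" where
  "invertible C X Y f \<longleftrightarrow> f \<in> Hom C X Y \<and>
    (\<exists>g\<in>Hom C Y X. cmp C g f = ide C X \<and> cmp C f g = ide C Y)"

definition split_epi :: "('o,'m) cat \<Rightarrow> 'o \<Rightarrow> 'o \<Rightarrow> 'm \<Rightarrow> 'm \<Rightarrow> bool" where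
  "split_epi C X Y f s \<longleftrightarrow> f \<in> Hom C X Y \<and> s \<in> Hom C Y X \<and> cmp C f s = ide C Y"

definition fibrational :: "('o,'m) cat \<Rightarrow> ('o \<Rightarrow> 'o \<Rightarrow> 'm \<Rightarrow> 'm \<Rightarrow> bool) \<Rightarrow> bool" where
  "fibrational C Sig \<longleftrightarrow>
    (\<forall>X Y f s. Sig X Y f s \<longrightarrow> split_epi C X Y f s) \<and>
    (\<forall>X Y f s. split_epi C X Y f s \<and> invertible C X Y f \<longrightarrow> Sig X Y f s) \<and>
    (\<forall>X Y f s Y' v X' f' v' s'. Sig X Y f s \<longrightarrow> v \<in> Hom C Y' Y \<longrightarrow>
       is_pullback C Y' X Y v f X' f' v' \<longrightarrow> s' \<in> Hom C Y' X' \<longrightarrow>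
       cmp C f' s' = ide C Y' \<longrightarrow> cmp C v' s' = cmp C s v \<longrightarrow> Sig X' Y' f' s')"

definition jointly_ext_epic :: "('o,'m) cat \<Rightarrow> 'o \<Rightarrow> 'o \<Rightarrow> 'o \<Rightarrow> 'm \<Rightarrow> 'm \<Rightarrow> bool" where
  "jointly_ext_epic C A B W a b \<longleftrightarrow> a \<in> Hom C A W \<and> b \<in> Hom C B W \<and>
    (\<forall>M m a' b'. mono C M W m \<longrightarrow> a' \<in> Hom C A M \<longrightarrow> b' \<in> Hom C B M \<longrightarrow>
       cmp C m a' = a \<longrightarrow> cmp C m b' = b \<longrightarrow> invertible C M W m)"

definition sigma_maltsev :: "('o,'m) cat \<Rightarrow> ('o \<Rightarrow> 'o \<Rightarrow> 'm \<Rightarrow> 'm \<Rightarrow> bool) \<Rightarrow> bool" where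
  "sigma_maltsev C Sig \<longleftrightarrow>
    (\<forall>X Y f s Y' g t X' p1 p2 s' tb. Sig X Y f s \<longrightarrow> split_epi C Y' Y g t \<longrightarrow>
       is_pullback C Y' X Y g f X' p1 p2 \<longrightarrow>
       s' \<in> Hom C Y' X' \<longrightarrow> cmp C p1 s' = ide C Y' \<longrightarrow> cmp C p2 s' = cmp C s g \<longrightarrow>
       tb \<in> Hom C X X' \<longrightarrow> cmp C p1 tb = cmp C t f \<longrightarrow> cmp C p2 tb = ide C X \<longrightarrow>
       jointly_ext_epic C Y' X X' s' tb)"

text \<open>A point (X, f, s) over Y: a split epimorphism (f,s) : X \<rightleftarrows> Y.\<close>
type_synonym ('o,'m) pt = "'o \<times> 'm \<times> 'm"

definition pcar :: "('o,'m) pt \<Rightarrow> 'o" where "pcar A = fst A"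
definition pmap :: "('o,'m) pt \<Rightarrow> 'm" where "pmap A = fst (snd A)"
definition psec :: "('o,'m) pt \<Rightarrow> 'm" where "psec A = snd (snd A)"

definition pt_ob :: "('o,'m) cat \<Rightarrow> 'o \<Rightarrow> ('o,'m) pt \<Rightarrow> bool" where
  "pt_ob C Y A \<longleftrightarrow> split_epi C (pcar A) Y (pmap A) (psec A)"

definition sig_ob :: "('o \<Rightarrow> 'o \<Rightarrow> 'm \<Rightarrow> 'm \<Rightarrow> bool) \<Rightarrow> 'o \<Rightarrow> ('o,'m) pt \<Rightarrow> bool" where
  "sig_ob Sig Y A \<longleftrightarrow> Sig (pcar A) Y (pmap A) (psec A)"

definition pt_hom :: "('o,'m) cat \<Rightarrow> 'o \<Rightarrow> ('o,'m) pt \<Rightarrow> ('o,'m) pt \<Rightarrow> 'm set" where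
  "pt_hom C Y A B = {u. pt_ob C Y A \<and> pt_ob C Y B \<and> u \<in> Hom C (pcar A) (pcar B) \<and>
      cmp C (pmap B) u = pmap A \<and> cmp C u (psec A) = psec B}"

definition pt_mono :: "('o,'m) cat \<Rightarrow> 'o \<Rightarrow> ('o,'m) pt \<Rightarrow> ('o,'m) pt \<Rightarrow> 'm \<Rightarrow> bool" where
  "pt_mono C Y A B m \<longleftrightarrow> m \<in> pt_hom C Y A B \<and>
    (\<forall>D u v. u \<in> pt_hom C Y D A \<longrightarrow> v \<in> pt_hom C Y D A \<longrightarrow> cmp C m u = cmp C m v \<longrightarrow> u = v)"

definition pt_iso :: "('o,'m) cat \<Rightarrow> 'o \<Rightarrow> ('o,'m) pt \<Rightarrow> ('o,'m) pt \<Rightarrow> 'm \<Rightarrow> bool" where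
  "pt_iso C Y A B u \<longleftrightarrow> u \<in> pt_hom C Y A B \<and>
    (\<exists>w\<in>pt_hom C Y B A. cmp C w u = ide C (pcar A) \<and> cmp C u w = ide C (pcar B))"

definition pb :: "('o,'m) cat \<Rightarrow> 'o \<Rightarrow> 'o \<Rightarrow> 'o \<Rightarrow> 'm \<Rightarrow> 'm \<Rightarrow> 'o \<times> 'm \<times> 'm" where
  "pb C X Y Z f g = (SOME (P, p1, p2). is_pullback C X Y Z f g P p1 p2)"

definition bc_data :: "('o,'m) cat \<Rightarrow> 'o \<Rightarrow> 'o \<Rightarrow> 'm \<Rightarrow> ('o,'m) pt \<Rightarrow> 'o \<times> 'm \<times> 'm" where
  "bc_data C Y Z g A = pb C Y (pcar A) Z g (pmap A)"

definition bc_ob :: "('o,'m) cat \<Rightarrow> 'o \<Rightarrow> 'o \<Rightarrow> 'm \<Rightarrow> ('o,'m) pt \<Rightarrow> ('o,'m) pt" where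
  "bc_ob C Y Z g A = (case bc_data C Y Z g A of (P, q, r) \<Rightarrow>
     (P, q, THE s'. s' \<in> Hom C Y P \<and> cmp C q s' = ide C Y \<and> cmp C r s' = cmp C (psec A) g))"

definition bc_hom :: "('o,'m) cat \<Rightarrow> 'o \<Rightarrow> 'o \<Rightarrow> 'm \<Rightarrow> ('o,'m) pt \<Rightarrow> ('o,'m) pt \<Rightarrow> 'm \<Rightarrow> 'm" where
  "bc_hom C Y Z g A B k = (case bc_data C Y Z g A of (PA, qA, rA) \<Rightarrow>
     (case bc_data C Y Z g B of (PB, qB, rB) \<Rightarrow>
       THE u. u \<in> Hom C PA PB \<and> cmp C qB u = qA \<and> cmp C rB u = cmp C k rA))"

definition subrep :: "('o,'m) cat \<Rightarrow> 'o \<Rightarrow> (('o,'m) pt \<Rightarrow> bool) \<Rightarrow> ('o,'m) pt \<Rightarrow> (('o,'m) pt \<times> 'm) set" where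
  "subrep C Y S B = {(A, m). pt_ob C Y A \<and> S A \<and> pt_mono C Y A B m}"

definition sub_equiv :: "('o,'m) cat \<Rightarrow> 'o \<Rightarrow> ('o,'m) pt \<times> 'm \<Rightarrow> ('o,'m) pt \<times> 'm \<Rightarrow> bool" where
  "sub_equiv C Y r r' \<longleftrightarrow> (\<exists>u. pt_iso C Y (fst r) (fst r') u \<and> cmp C (snd r') u = snd r)"

definition subobjects :: "('o,'m) cat \<Rightarrow> 'o \<Rightarrow> (('o,'m) pt \<Rightarrow> bool) \<Rightarrow> ('o,'m) pt \<Rightarrow> (('o,'m) pt \<times> 'm) set set" where
  "subobjects C Y S B = (\<lambda>r. {r' \<in> subrep C Y S B. sub_equiv C Y r' r}) ` subrep C Y S B"

text \<open>The map on subobjects induced by g^*: a class c is sent to the union of the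
  classes of g^*(m) for m in c (a single class whenever well defined).\<close>
definition bc_sub :: "('o,'m) cat \<Rightarrow> ('o \<Rightarrow> 'o \<Rightarrow> 'm \<Rightarrow> 'm \<Rightarrow> bool) \<Rightarrow> 'o \<Rightarrow> 'o \<Rightarrow> 'm \<Rightarrow>
    ('o,'m) pt \<Rightarrow> (('o,'m) pt \<times> 'm) set \<Rightarrow> (('o,'m) pt \<times> 'm) set" where
  "bc_sub C Sig Y Z g B c = {r' \<in> subrep C Y (sig_ob Sig Y) (bc_ob C Y Z g B).
      \<exists>(A, m)\<in>c. sub_equiv C Y r' (bc_ob C Y Z g A, bc_hom C Y Z g A B m)}"

end

theory Submission
  imports Defs
begin

text \<open>For a point \<open>(f, s) : X \<rightleftarrows> Z\<close> let \<open>tbar = (t f, 1) : X \<rightarrow> Y \<times>\<^sub>Z X\<close>.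
  Faithfulness of \<open>g\<^sup>*\<close> is elementary: \<open>k\<close> is recovered from \<open>g\<^sup>*(k)\<close> by composing with \<open>tbar\<close>
  and the projection to \<open>X\<close>. For a \<open>\<Sigma>\<close>-point \<open>A\<close>, the Mal'tsev condition says that the
  section of \<open>g\<^sup>*(A)\<close> and \<open>tbar\<close> are jointly extremally epic, so maps out of \<open>g\<^sup>*(A)\<close> are
  determined by their restrictions along them; this makes every \<open>h : g\<^sup>*(A) \<rightarrow> g\<^sup>*(B)\<close> the base
  change of \<open>bc_snd B \<cdot> h \<cdot> tbar A\<close>, and full faithfulness makes \<open>g\<^sup>*\<close> injective on
  \<open>\<Sigma>\<close>-subobjects. For surjectivity, a \<open>\<Sigma>\<close>-subobject \<open>n : D \<rightarrowtail> g\<^sup>*(B)\<close> is pulled back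
  along \<open>tbar\<close>; the result is a pullback of \<open>D\<close> along \<open>t\<close>, hence a \<open>\<Sigma>\<close>-subobject of \<open>B\<close>.
  Its base change is \<open>D\<close> again because \<open>n\<close> is saturated along the fibres of \<open>g\<close>: the
  Mal'tsev condition for \<open>D\<close> and the kernel pair of \<open>g\<close> shows that a generalised point of
  \<open>g\<^sup>*(B)\<close> lies in \<open>n\<close> as soon as one with the same \<open>B\<close>-component and a \<open>g\<close>-equivalent
  \<open>Y\<close>-component does.\<close>

section \<open>Pullbacks and jointly extremally epic pairs\<close>

locale finitely_complete_cat =
  fixes C :: "('o,'m) cat"
  assumes finitely_complete: "finitely_complete C"
begin

abbreviation comp (infixr "\<cdot>" 55) where "g \<cdot> f \<equiv> cmp C g f"

lemma category: "category C"
  using finitely_complete unfolding finitely_complete_def by blast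

lemma comp_in_Hom: "f \<in> Hom C X Y \<Longrightarrow> g \<in> Hom C Y Z \<Longrightarrow> g \<cdot> f \<in> Hom C X Z"
  using category unfolding category_def by blast

lemma ide_in_Hom_dom: "f \<in> Hom C X Y \<Longrightarrow> ide C X \<in> Hom C X X"
  using category unfolding category_def by blast

lemma comp_ide_left: "f \<in> Hom C X Y \<Longrightarrow> ide C Y \<cdot> f = f"
  using category unfolding category_def by blast

lemma comp_ide_right: "f \<in> Hom C X Y \<Longrightarrow> f \<cdot> ide C X = f"
  using category unfolding category_def by blast

lemma comp_assoc: "f \<in> Hom C W X \<Longrightarrow> g \<in> Hom C X Y \<Longrightarrow> h \<in> Hom C Y Z \<Longrightarrow>
   (h \<cdot> g) \<cdot> f = h \<cdot> (g \<cdot> f)"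
  using category unfolding category_def by metis

lemma pullback_exists: "f \<in> Hom C X Z \<Longrightarrow> g \<in> Hom C Y Z \<Longrightarrow> \<exists>P p1 p2. is_pullback C X Y Z f g P p1 p2"
  using finitely_complete unfolding finitely_complete_def by blast

lemma pullbackD:
  assumes "is_pullback C X Y Z f g P p1 p2"
  shows "f \<in> Hom C X Z" "g \<in> Hom C Y Z" "p1 \<in> Hom C P X" "p2 \<in> Hom C P Y" "f \<cdot> p1 = g \<cdot> p2"
  using assms unfolding is_pullback_def by blast+

lemma pullback_lift:
  assumes "is_pullback C X Y Z f g P p1 p2" "q1 \<in> Hom C Q X" "q2 \<in> Hom C Q Y" "f \<cdot> q1 = g \<cdot> q2"
  obtains u where "u \<in> Hom C Q P" "p1 \<cdot> u = q1" "p2 \<cdot> u = q2"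
  using assms unfolding is_pullback_def by blast

lemma pullback_eqI:
  assumes pb: "is_pullback C X Y Z f g P p1 p2" and u: "u \<in> Hom C Q P" and v: "v \<in> Hom C Q P"
   and "p1 \<cdot> u = p1 \<cdot> v" "p2 \<cdot> u = p2 \<cdot> v"
  shows "u = v"
proof -
  note d = pullbackD[OF pb]
  have "f \<cdot> (p1 \<cdot> u) = g \<cdot> (p2 \<cdot> u)"
    using comp_assoc[OF u d(3) d(1)] comp_assoc[OF u d(4) d(2)] d(5) by simp
  then have "\<exists>!w. w \<in> Hom C Q P \<and> p1 \<cdot> w = p1 \<cdot> u \<and> p2 \<cdot> w = p2 \<cdot> u"
    using pb comp_in_Hom[OF u d(3)] comp_in_Hom[OF u d(4)] unfolding is_pullback_def by blast
  then show ?thesis using u v assms(4,5) by metis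
qed

lemma the_pullback_lift:
  assumes pb: "is_pullback C X Y Z f g P p1 p2"
    and u: "u \<in> Hom C Q P" "p1 \<cdot> u = q1" "p2 \<cdot> u = q2"
  shows "(THE w. w \<in> Hom C Q P \<and> p1 \<cdot> w = q1 \<and> p2 \<cdot> w = q2) = u"
  using pullback_eqI[OF pb] u by (intro the_equality) metis+

lemma pb_is_pullback:
  assumes "f \<in> Hom C X Z" "g \<in> Hom C Y Z"
  shows "is_pullback C X Y Z f g (fst (pb C X Y Z f g)) (fst (snd (pb C X Y Z f g)))
           (snd (snd (pb C X Y Z f g)))"
proof -
  obtain P p1 p2 where "is_pullback C X Y Z f g P p1 p2" using pullback_exists assms by blast
  then have "\<exists>x. case x of (P, p1, p2) \<Rightarrow> is_pullback C X Y Z f g P p1 p2" by auto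
  then have "case pb C X Y Z f g of (P, p1, p2) \<Rightarrow> is_pullback C X Y Z f g P p1 p2"
    unfolding pb_def by (rule someI_ex)
  then show ?thesis by (auto split: prod.splits)
qed

lemma mono_cancel: "mono C M W m \<Longrightarrow> u \<in> Hom C A M \<Longrightarrow> v \<in> Hom C A M \<Longrightarrow> m \<cdot> u = m \<cdot> v \<Longrightarrow> u = v"
  unfolding mono_def by blast

lemma pullback_mono:
  assumes pb: "is_pullback C X Y Z f g P p1 p2" and m: "mono C Y Z g"
  shows "mono C P X p1"
  unfolding mono_def
proof (intro conjI allI impI)
  note d = pullbackD[OF pb]
  show "p1 \<in> Hom C P X" by (rule d(3))
  fix A u v assume u: "u \<in> Hom C A P" and v: "v \<in> Hom C A P" and e: "p1 \<cdot> u = p1 \<cdot> v"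
  have "g \<cdot> (p2 \<cdot> u) = g \<cdot> (p2 \<cdot> v)"
    using comp_assoc[OF u d(4) d(2)] comp_assoc[OF v d(4) d(2)] comp_assoc[OF u d(3) d(1)]
      comp_assoc[OF v d(3) d(1)] d(5) e
    by metis
  then have "p2 \<cdot> u = p2 \<cdot> v" using mono_cancel[OF m] comp_in_Hom u v d by blast
  then show "u = v" using pullback_eqI[OF pb u v e] by blast
qed

lemma split_mono:
  assumes s: "s \<in> Hom C X Y" and r: "r \<in> Hom C Y X" and rs: "r \<cdot> s = ide C X"
  shows "mono C X Y s"
  unfolding mono_def
proof (intro conjI allI impI)
  show "s \<in> Hom C X Y" by (rule s)
  fix A u v assume u: "u \<in> Hom C A X" and v: "v \<in> Hom C A X" and e: "s \<cdot> u = s \<cdot> v"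
  have "u = r \<cdot> (s \<cdot> u)" using comp_assoc[OF u s r] rs comp_ide_left[OF u] by simp
  also have "\<dots> = v" using comp_assoc[OF v s r] rs comp_ide_left[OF v] e by simp
  finally show "u = v" .
qed

lemma jointly_ext_epic_factor:
  assumes j: "jointly_ext_epic C A B W a b" and n: "mono C D V n" and th: "\<theta> \<in> Hom C W V"
   and a2: "a2 \<in> Hom C A D" and b2: "b2 \<in> Hom C B D" and ea: "\<theta> \<cdot> a = n \<cdot> a2" and eb: "\<theta> \<cdot> b = n \<cdot> b2"
  shows "\<exists>\<rho>\<in>Hom C W D. n \<cdot> \<rho> = \<theta>"
proof -
  have nH: "n \<in> Hom C D V" using n unfolding mono_def by blast
  have a: "a \<in> Hom C A W" and b: "b \<in> Hom C B W" using j unfolding jointly_ext_epic_def by auto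
  obtain M \<mu> \<nu> where pb: "is_pullback C W D V \<theta> n M \<mu> \<nu>" using pullback_exists th nH by blast
  note d = pullbackD[OF pb]
  obtain a' where a': "a' \<in> Hom C A M" "\<mu> \<cdot> a' = a" "\<nu> \<cdot> a' = a2"
    using pullback_lift[OF pb a a2 ea] by blast
  obtain b' where b': "b' \<in> Hom C B M" "\<mu> \<cdot> b' = b" "\<nu> \<cdot> b' = b2"
    using pullback_lift[OF pb b b2 eb] by blast
  have "invertible C M W \<mu>"
    using j pullback_mono[OF pb n] a' b' unfolding jointly_ext_epic_def by blast
  then obtain \<mu>' where \<mu>': "\<mu>' \<in> Hom C W M" "\<mu> \<cdot> \<mu>' = ide C W" unfolding invertible_def by blast
  have "n \<cdot> (\<nu> \<cdot> \<mu>') = (\<theta> \<cdot> \<mu>) \<cdot> \<mu>'" using comp_assoc[OF \<mu>'(1) d(4) nH] d(5) by simp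
  also have "\<dots> = \<theta>" using comp_assoc[OF \<mu>'(1) d(3) th] \<mu>'(2) comp_ide_right[OF th] by simp
  finally show ?thesis using comp_in_Hom[OF \<mu>'(1) d(4)] by blast
qed

text \<open>Two maps agreeing on a jointly extremally epic pair are equal; the auxiliary \<open>\<phi>\<close> only
  serves to form the pullback through whose diagonal both maps are compared.\<close>
lemma jointly_ext_epic_eqI:
  assumes j: "jointly_ext_epic C A B W a b" and h: "h \<in> Hom C W V" and h': "h' \<in> Hom C W V"
   and \<phi>: "\<phi> \<in> Hom C V U" and e0: "\<phi> \<cdot> h = \<phi> \<cdot> h'" and ea: "h \<cdot> a = h' \<cdot> a" and eb: "h \<cdot> b = h' \<cdot> b"
  shows "h = h'"
proof -
  have a: "a \<in> Hom C A W" and b: "b \<in> Hom C B W" using j unfolding jointly_ext_epic_def by auto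
  obtain K k1 k2 where pb: "is_pullback C V V U \<phi> \<phi> K k1 k2" using pullback_exists \<phi> by blast
  note d = pullbackD[OF pb]
  have iV: "ide C V \<in> Hom C V V" using ide_in_Hom_dom[OF \<phi>] .
  obtain \<delta> where \<delta>: "\<delta> \<in> Hom C V K" "k1 \<cdot> \<delta> = ide C V" "k2 \<cdot> \<delta> = ide C V"
    using pullback_lift[OF pb iV iV] by blast
  have \<delta>_mono: "mono C V K \<delta>" using split_mono[OF \<delta>(1) d(3) \<delta>(2)] .
  obtain \<theta> where \<theta>: "\<theta> \<in> Hom C W K" "k1 \<cdot> \<theta> = h" "k2 \<cdot> \<theta> = h'"
    using pullback_lift[OF pb h h' e0] by blast
  have \<theta>_diag: "\<theta> \<cdot> c = \<delta> \<cdot> (h \<cdot> c)" if c: "c \<in> Hom C A0 W" "h \<cdot> c = h' \<cdot> c" for c A0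
  proof (rule pullback_eqI[OF pb])
    have hc: "h \<cdot> c \<in> Hom C A0 V" using comp_in_Hom c h by blast
    show "\<theta> \<cdot> c \<in> Hom C A0 K" "\<delta> \<cdot> (h \<cdot> c) \<in> Hom C A0 K" using comp_in_Hom c \<theta> hc \<delta> by blast+
    show "k1 \<cdot> \<theta> \<cdot> c = k1 \<cdot> \<delta> \<cdot> h \<cdot> c"
      using comp_assoc[OF c(1) \<theta>(1) d(3)] comp_assoc[OF hc \<delta>(1) d(3)] \<theta> \<delta> comp_ide_left[OF hc] by simp
    show "k2 \<cdot> \<theta> \<cdot> c = k2 \<cdot> \<delta> \<cdot> h \<cdot> c"
      using comp_assoc[OF c(1) \<theta>(1) d(4)] comp_assoc[OF hc \<delta>(1) d(4)] \<theta> \<delta> comp_ide_left[OF hc] c(2)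
      by simp
  qed
  obtain \<rho> where \<rho>: "\<rho> \<in> Hom C W V" "\<delta> \<cdot> \<rho> = \<theta>"
    using jointly_ext_epic_factor[OF j \<delta>_mono \<theta>(1) comp_in_Hom[OF a h] comp_in_Hom[OF b h]
        \<theta>_diag[OF a ea] \<theta>_diag[OF b eb]]
    by blast
  have "h = \<rho>" using \<theta>(2) \<rho> comp_assoc[OF \<rho>(1) \<delta>(1) d(3)] \<delta> comp_ide_left[OF \<rho>(1)] by simp
  moreover have "h' = \<rho>" using \<theta>(3) \<rho> comp_assoc[OF \<rho>(1) \<delta>(1) d(4)] \<delta> comp_ide_left[OF \<rho>(1)] by simp
  ultimately show ?thesis by simp
qed

section \<open>Points and their subobjects\<close>

lemma pt_obD:
  "pt_ob C Y A \<Longrightarrow> pmap A \<in> Hom C (pcar A) Y \<and> psec A \<in> Hom C Y (pcar A) \<and> pmap A \<cdot> psec A = ide C Y"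
  unfolding pt_ob_def split_epi_def by blast

lemma pt_homD:
  "u \<in> pt_hom C Y A B \<Longrightarrow> pt_ob C Y A \<and> pt_ob C Y B \<and> u \<in> Hom C (pcar A) (pcar B) \<and>
      pmap B \<cdot> u = pmap A \<and> u \<cdot> psec A = psec B"
  unfolding pt_hom_def by blast

lemma pt_homI:
  "pt_ob C Y A \<Longrightarrow> pt_ob C Y B \<Longrightarrow> u \<in> Hom C (pcar A) (pcar B) \<Longrightarrow>
      pmap B \<cdot> u = pmap A \<Longrightarrow> u \<cdot> psec A = psec B \<Longrightarrow> u \<in> pt_hom C Y A B"
  unfolding pt_hom_def by blast

lemma pt_simps [simp]: "pcar (X, f, s) = X" "pmap (X, f, s) = f" "psec (X, f, s) = s"
  unfolding pcar_def pmap_def psec_def by auto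

lemma pt_hom_comp: "u \<in> pt_hom C Y A B \<Longrightarrow> v \<in> pt_hom C Y B D \<Longrightarrow> v \<cdot> u \<in> pt_hom C Y A D"
proof -
  assume u: "u \<in> pt_hom C Y A B" and v: "v \<in> pt_hom C Y B D"
  note ud = pt_homD[OF u] and vd = pt_homD[OF v]
  have uH: "u \<in> Hom C (pcar A) (pcar B)" and vH: "v \<in> Hom C (pcar B) (pcar D)" using ud vd by auto
  have fD: "pmap D \<in> Hom C (pcar D) Y" and sA: "psec A \<in> Hom C Y (pcar A)"
    using pt_obD ud vd by auto
  show ?thesis
    using ud vd comp_in_Hom[OF uH vH] comp_assoc[OF uH vH fD] comp_assoc[OF sA uH vH]
    by (intro pt_homI) auto
qed

lemma pt_hom_ide: "pt_ob C Y A \<Longrightarrow> ide C (pcar A) \<in> pt_hom C Y A A"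
proof -
  assume A: "pt_ob C Y A"
  then have fA: "pmap A \<in> Hom C (pcar A) Y" and sA: "psec A \<in> Hom C Y (pcar A)" using pt_obD by auto
  show ?thesis using A ide_in_Hom_dom[OF fA] comp_ide_right[OF fA] comp_ide_left[OF sA] by (intro pt_homI) auto
qed

lemma pt_isoD:
  "pt_iso C Y A B u \<Longrightarrow>
     \<exists>w\<in>pt_hom C Y B A. u \<in> pt_hom C Y A B \<and> w \<cdot> u = ide C (pcar A) \<and> u \<cdot> w = ide C (pcar B)"
  unfolding pt_iso_def by blast

lemma pt_iso_comp: "pt_iso C Y A B u \<Longrightarrow> pt_iso C Y B D v \<Longrightarrow> pt_iso C Y A D (v \<cdot> u)"
proof -
  assume "pt_iso C Y A B u" "pt_iso C Y B D v"
  then obtain u' v' where u': "u' \<in> pt_hom C Y B A" "u' \<cdot> u = ide C (pcar A)" "u \<cdot> u' = ide C (pcar B)"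
    and v': "v' \<in> pt_hom C Y D B" "v' \<cdot> v = ide C (pcar B)" "v \<cdot> v' = ide C (pcar D)"
    and uh: "u \<in> pt_hom C Y A B" and vh: "v \<in> pt_hom C Y B D"
    using pt_isoD by metis
  have uH: "u \<in> Hom C (pcar A) (pcar B)" and vH: "v \<in> Hom C (pcar B) (pcar D)"
   and u'H: "u' \<in> Hom C (pcar B) (pcar A)" and v'H: "v' \<in> Hom C (pcar D) (pcar B)"
    using pt_homD uh vh u' v' by auto
  have "(u' \<cdot> v') \<cdot> (v \<cdot> u) = u' \<cdot> ((v' \<cdot> v) \<cdot> u)"
    using comp_assoc[OF comp_in_Hom[OF uH vH] v'H u'H] comp_assoc[OF uH vH v'H] by simp
  also have "\<dots> = ide C (pcar A)" using v' comp_ide_left[OF uH] u' by simp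
  finally have inv1: "(u' \<cdot> v') \<cdot> (v \<cdot> u) = ide C (pcar A)" .
  have "(v \<cdot> u) \<cdot> (u' \<cdot> v') = v \<cdot> ((u \<cdot> u') \<cdot> v')"
    using comp_assoc[OF comp_in_Hom[OF v'H u'H] uH vH] comp_assoc[OF v'H u'H uH] by simp
  also have "\<dots> = ide C (pcar D)" using u' comp_ide_left[OF v'H] v' by simp
  finally have inv2: "(v \<cdot> u) \<cdot> (u' \<cdot> v') = ide C (pcar D)" .
  show ?thesis unfolding pt_iso_def using pt_hom_comp uh vh u' v' inv1 inv2 by blast
qed

text \<open>Monomorphisms of points are monomorphisms of the underlying objects: the kernel pair of
  the underlying map is again a point, and both projections are maps of points.\<close>
lemma pt_mono_imp_mono:
  assumes m: "pt_mono C Y A B m"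
  shows "mono C (pcar A) (pcar B) m"
proof -
  note md = pt_homD[OF conjunct1[OF m[unfolded pt_mono_def]]]
  have mH: "m \<in> Hom C (pcar A) (pcar B)" using md by blast
  have fA: "pmap A \<in> Hom C (pcar A) Y" and sA: "psec A \<in> Hom C Y (pcar A)"
    and fs: "pmap A \<cdot> psec A = ide C Y" and fB: "pmap B \<in> Hom C (pcar B) Y"
    using pt_obD md by auto
  obtain K k1 k2 where pb: "is_pullback C (pcar A) (pcar A) (pcar B) m m K k1 k2"
    using pullback_exists mH by blast
  note d = pullbackD[OF pb]
  obtain \<sigma> where \<sigma>: "\<sigma> \<in> Hom C Y K" "k1 \<cdot> \<sigma> = psec A" "k2 \<cdot> \<sigma> = psec A"
    using pullback_lift[OF pb sA sA] by blast
  define Kp where "Kp = (K, pmap A \<cdot> k1, \<sigma>)"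
  have Kp: "pt_ob C Y Kp" unfolding Kp_def pt_ob_def split_epi_def
    using comp_in_Hom[OF d(3) fA] \<sigma> comp_assoc[OF \<sigma>(1) d(3) fA] fs by simp
  have "pmap A \<cdot> k2 = pmap B \<cdot> (m \<cdot> k2)" using md comp_assoc[OF d(4) mH fB] by simp
  also have "\<dots> = pmap A \<cdot> k1" using comp_assoc[OF d(3) mH fB] md d(5) by simp
  finally have "pmap A \<cdot> k2 = pmap A \<cdot> k1" .
  then have "k1 \<in> pt_hom C Y Kp A" "k2 \<in> pt_hom C Y Kp A"
    using Kp md d \<sigma> by (auto intro!: pt_homI simp: Kp_def)
  then have k12: "k1 = k2" using m d(5) unfolding pt_mono_def by blast
  show ?thesis unfolding mono_def
  proof (intro conjI allI impI)
    show "m \<in> Hom C (pcar A) (pcar B)" by (rule mH)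
    fix W u v assume u: "u \<in> Hom C W (pcar A)" and v: "v \<in> Hom C W (pcar A)" and "m \<cdot> u = m \<cdot> v"
    then obtain w where "k1 \<cdot> w = u" "k2 \<cdot> w = v" using pullback_lift[OF pb] by metis
    then show "u = v" using k12 by simp
  qed
qed

lemma mono_imp_pt_mono: "mono C (pcar A) (pcar B) m \<Longrightarrow> m \<in> pt_hom C Y A B \<Longrightarrow> pt_mono C Y A B m"
  unfolding pt_mono_def mono_def pt_hom_def by blast

lemma pt_mono_factor_pt_hom:
  assumes n: "pt_mono C Y D B n" and u: "u \<in> pt_hom C Y A B"
    and \<phi>: "\<phi> \<in> Hom C (pcar A) (pcar D)" and n\<phi>: "n \<cdot> \<phi> = u"
  shows "\<phi> \<in> pt_hom C Y A D"
proof -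
  have nh: "n \<in> pt_hom C Y D B" using n unfolding pt_mono_def by blast
  note nd = pt_homD[OF nh] and ud = pt_homD[OF u]
  have nH: "n \<in> Hom C (pcar D) (pcar B)" and fB: "pmap B \<in> Hom C (pcar B) Y"
    and sA: "psec A \<in> Hom C Y (pcar A)" and sD: "psec D \<in> Hom C Y (pcar D)"
    using nd ud pt_obD by auto
  have "pmap D \<cdot> \<phi> = pmap A" using comp_assoc[OF \<phi> nH fB] nd ud n\<phi> by simp
  moreover have "\<phi> \<cdot> psec A = psec D"
    using mono_cancel[OF pt_mono_imp_mono[OF n] comp_in_Hom[OF sA \<phi>] sD] comp_assoc[OF sA \<phi> nH] n\<phi> nd ud
    by simp
  ultimately show ?thesis using nd ud \<phi> by (intro pt_homI) auto
qed

lemma subrepD: "r \<in> subrep C Y S B \<Longrightarrow> pt_ob C Y (fst r) \<and> S (fst r) \<and> pt_mono C Y (fst r) B (snd r)"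
  unfolding subrep_def by auto

lemma subrep_pt_hom: "r \<in> subrep C Y S B \<Longrightarrow> snd r \<in> pt_hom C Y (fst r) B"
  using subrepD unfolding pt_mono_def by blast

lemma sub_equiv_refl: "r \<in> subrep C Y S B \<Longrightarrow> sub_equiv C Y r r"
proof -
  assume r: "r \<in> subrep C Y S B"
  then have i: "ide C (pcar (fst r)) \<in> pt_hom C Y (fst r) (fst r)" using pt_hom_ide subrepD by blast
  have "snd r \<cdot> ide C (pcar (fst r)) = snd r" using pt_homD[OF subrep_pt_hom[OF r]] comp_ide_right by blast
  moreover have "pt_iso C Y (fst r) (fst r) (ide C (pcar (fst r)))"
    unfolding pt_iso_def using i pt_homD[OF i] comp_ide_left by blast
  ultimately show ?thesis unfolding sub_equiv_def by blast
qed

lemma sub_equiv_sym: "r' \<in> subrep C Y S B \<Longrightarrow> sub_equiv C Y r r' \<Longrightarrow> sub_equiv C Y r' r"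
proof -
  assume r': "r' \<in> subrep C Y S B" and "sub_equiv C Y r r'"
  then obtain u w where u: "u \<in> pt_hom C Y (fst r) (fst r')" "snd r' \<cdot> u = snd r"
    and w: "w \<in> pt_hom C Y (fst r') (fst r)" "w \<cdot> u = ide C (pcar (fst r))" "u \<cdot> w = ide C (pcar (fst r'))"
    unfolding sub_equiv_def pt_iso_def by blast
  have mH: "snd r' \<in> Hom C (pcar (fst r')) (pcar B)" using pt_homD[OF subrep_pt_hom[OF r']] by blast
  have wH: "w \<in> Hom C (pcar (fst r')) (pcar (fst r))" and uH: "u \<in> Hom C (pcar (fst r)) (pcar (fst r'))"
    using pt_homD w u by auto
  have "snd r \<cdot> w = snd r'" using u(2)[symmetric] comp_assoc[OF wH uH mH] w comp_ide_right[OF mH] by simp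
  moreover have "pt_iso C Y (fst r') (fst r) w" unfolding pt_iso_def using w u by blast
  ultimately show ?thesis unfolding sub_equiv_def by blast
qed

lemma sub_equiv_trans:
  "r3 \<in> subrep C Y S B \<Longrightarrow> sub_equiv C Y r1 r2 \<Longrightarrow> sub_equiv C Y r2 r3 \<Longrightarrow> sub_equiv C Y r1 r3"
proof -
  assume r3: "r3 \<in> subrep C Y S B" and "sub_equiv C Y r1 r2" "sub_equiv C Y r2 r3"
  then obtain u v where u: "pt_iso C Y (fst r1) (fst r2) u" "snd r2 \<cdot> u = snd r1"
    and v: "pt_iso C Y (fst r2) (fst r3) v" "snd r3 \<cdot> v = snd r2" unfolding sub_equiv_def by blast
  have mH: "snd r3 \<in> Hom C (pcar (fst r3)) (pcar B)" using pt_homD[OF subrep_pt_hom[OF r3]] by blast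
  have uH: "u \<in> Hom C (pcar (fst r1)) (pcar (fst r2))" and vH: "v \<in> Hom C (pcar (fst r2)) (pcar (fst r3))"
    using u(1) v(1) unfolding pt_iso_def pt_hom_def by auto
  have "snd r3 \<cdot> (v \<cdot> u) = snd r1" using comp_assoc[OF uH vH mH] u v by simp
  then show ?thesis unfolding sub_equiv_def using pt_iso_comp[OF u(1) v(1)] by blast
qed

lemma sub_equiv_of_factorizations:
  assumes r: "(A, u) \<in> subrep C Y S B" and r': "(D, n) \<in> subrep C Y S' B"
    and \<phi>: "\<phi> \<in> Hom C (pcar A) (pcar D)" "n \<cdot> \<phi> = u"
    and \<psi>: "\<psi> \<in> Hom C (pcar D) (pcar A)" "u \<cdot> \<psi> = n"
  shows "sub_equiv C Y (A, u) (D, n)"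
proof -
  have um: "pt_mono C Y A B u" and nm: "pt_mono C Y D B n" using subrepD[OF r] subrepD[OF r'] by auto
  have uh: "u \<in> pt_hom C Y A B" and nh: "n \<in> pt_hom C Y D B"
    using subrep_pt_hom[OF r] subrep_pt_hom[OF r'] by auto
  have uH: "u \<in> Hom C (pcar A) (pcar B)" and nH: "n \<in> Hom C (pcar D) (pcar B)"
    using pt_homD[OF uh] pt_homD[OF nh] by auto
  have "\<phi> \<cdot> \<psi> = ide C (pcar D)"
    using mono_cancel[OF pt_mono_imp_mono[OF nm] comp_in_Hom[OF \<psi>(1) \<phi>(1)] ide_in_Hom_dom[OF nH]]
      comp_assoc[OF \<psi>(1) \<phi>(1) nH] \<phi> \<psi> comp_ide_right[OF nH]
    by simp
  moreover have "\<psi> \<cdot> \<phi> = ide C (pcar A)"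
    using mono_cancel[OF pt_mono_imp_mono[OF um] comp_in_Hom[OF \<phi>(1) \<psi>(1)] ide_in_Hom_dom[OF uH]]
      comp_assoc[OF \<phi>(1) \<psi>(1) uH] \<phi> \<psi> comp_ide_right[OF uH]
    by simp
  ultimately have "pt_iso C Y A D \<phi>"
    unfolding pt_iso_def using pt_mono_factor_pt_hom[OF nm uh \<phi>] pt_mono_factor_pt_hom[OF um nh \<psi>] by blast
  then show ?thesis unfolding sub_equiv_def using \<phi>(2) by auto
qed

definition sub_class where "sub_class Y S B r = {r' \<in> subrep C Y S B. sub_equiv C Y r' r}"

lemma subobjects_eq: "subobjects C Y S B = sub_class Y S B ` subrep C Y S B"
  unfolding subobjects_def sub_class_def by simp

lemma sub_class_eq_iff:
  assumes r1: "r1 \<in> subrep C Y S B" and r2: "r2 \<in> subrep C Y S B"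
  shows "sub_class Y S B r1 = sub_class Y S B r2 \<longleftrightarrow> sub_equiv C Y r1 r2"
proof
  assume "sub_class Y S B r1 = sub_class Y S B r2"
  moreover have "r1 \<in> sub_class Y S B r1" unfolding sub_class_def using r1 sub_equiv_refl[OF r1] by blast
  ultimately show "sub_equiv C Y r1 r2" unfolding sub_class_def by blast
next
  assume e: "sub_equiv C Y r1 r2"
  show "sub_class Y S B r1 = sub_class Y S B r2"
    unfolding sub_class_def using sub_equiv_trans[OF r1 _ sub_equiv_sym[OF r2 e]] sub_equiv_trans[OF r2 _ e]
    by blast
qed

end

section \<open>Base change along a split epimorphism\<close>

locale base_change = finitely_complete_cat +
  fixes Y Z :: 'a and g t :: 'b
  assumes split_epi: "split_epi C Y Z g t"
begin

abbreviation bc where "bc A \<equiv> bc_ob C Y Z g A"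
abbreviation bc_map where "bc_map A B k \<equiv> bc_hom C Y Z g A B k"

lemma g_in_Hom: "g \<in> Hom C Y Z" and t_in_Hom: "t \<in> Hom C Z Y" and g_t: "g \<cdot> t = ide C Z"
  using split_epi unfolding split_epi_def by auto

lemma ide_Y: "ide C Y \<in> Hom C Y Y" using ide_in_Hom_dom[OF g_in_Hom] .

lemma g_t_cancel: "f \<in> Hom C X Z \<Longrightarrow> g \<cdot> (t \<cdot> f) = f"
  using comp_assoc[OF _ t_in_Hom g_in_Hom] g_t comp_ide_left by metis

definition bc_snd where "bc_snd A = snd (snd (bc_data C Y Z g A))"

lemma bc_ob_eq:
  "bc A = (fst (bc_data C Y Z g A), fst (snd (bc_data C Y Z g A)),
     THE s'. s' \<in> Hom C Y (fst (bc_data C Y Z g A)) \<and> fst (snd (bc_data C Y Z g A)) \<cdot> s' = ide C Y \<and>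
       bc_snd A \<cdot> s' = psec A \<cdot> g)"
  unfolding bc_ob_def bc_snd_def by (simp split: prod.split)

lemma bc_psec_eq:
  "psec (bc A) = (THE s'. s' \<in> Hom C Y (pcar (bc A)) \<and> pmap (bc A) \<cdot> s' = ide C Y \<and>
     bc_snd A \<cdot> s' = psec A \<cdot> g)"
  unfolding bc_ob_eq by simp

lemma bc_pullback:
  "pt_ob C Z A \<Longrightarrow> is_pullback C Y (pcar A) Z g (pmap A) (pcar (bc A)) (pmap (bc A)) (bc_snd A)"
  unfolding bc_ob_eq bc_snd_def bc_data_def using pb_is_pullback g_in_Hom pt_obD by simp

lemma bc_hom_eq:
  "bc_map A B k = (THE u. u \<in> Hom C (pcar (bc A)) (pcar (bc B)) \<and> pmap (bc B) \<cdot> u = pmap (bc A) \<and>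
     bc_snd B \<cdot> u = k \<cdot> bc_snd A)"
  unfolding bc_hom_def bc_ob_eq bc_snd_def by (simp split: prod.split)

lemma bc_sec:
  assumes A: "pt_ob C Z A"
  shows "psec (bc A) \<in> Hom C Y (pcar (bc A))" "pmap (bc A) \<cdot> psec (bc A) = ide C Y"
    "bc_snd A \<cdot> psec (bc A) = psec A \<cdot> g"
proof -
  note pb = bc_pullback[OF A]
  have fA: "pmap A \<in> Hom C (pcar A) Z" and sA: "psec A \<in> Hom C Z (pcar A)"
    and fs: "pmap A \<cdot> psec A = ide C Z" using pt_obD[OF A] by auto
  have sg: "psec A \<cdot> g \<in> Hom C Y (pcar A)" using comp_in_Hom g_in_Hom sA by blast
  have "g \<cdot> ide C Y = pmap A \<cdot> (psec A \<cdot> g)"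
    using comp_ide_right[OF g_in_Hom] comp_assoc[OF g_in_Hom sA fA] fs comp_ide_left[OF g_in_Hom] by simp
  then obtain u where u: "u \<in> Hom C Y (pcar (bc A))" "pmap (bc A) \<cdot> u = ide C Y"
    "bc_snd A \<cdot> u = psec A \<cdot> g"
    using pullback_lift[OF pb ide_Y sg] by blast
  have "psec (bc A) = u" unfolding bc_psec_eq by (rule the_pullback_lift[OF pb u])
  then show "psec (bc A) \<in> Hom C Y (pcar (bc A))" "pmap (bc A) \<cdot> psec (bc A) = ide C Y"
    "bc_snd A \<cdot> psec (bc A) = psec A \<cdot> g" using u by auto
qed

lemma bc_pt_ob: "pt_ob C Z A \<Longrightarrow> pt_ob C Y (bc A)"
  unfolding pt_ob_def[of C Y] split_epi_def using bc_sec pullbackD[OF bc_pullback] by blast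

definition tbar where
  "tbar A = (THE u. u \<in> Hom C (pcar A) (pcar (bc A)) \<and> pmap (bc A) \<cdot> u = t \<cdot> pmap A \<and>
     bc_snd A \<cdot> u = ide C (pcar A))"

lemma tbar:
  assumes A: "pt_ob C Z A"
  shows "tbar A \<in> Hom C (pcar A) (pcar (bc A))" "pmap (bc A) \<cdot> tbar A = t \<cdot> pmap A"
    "bc_snd A \<cdot> tbar A = ide C (pcar A)"
proof -
  note pb = bc_pullback[OF A]
  have fA: "pmap A \<in> Hom C (pcar A) Z" using pt_obD[OF A] by blast
  have "g \<cdot> (t \<cdot> pmap A) = pmap A \<cdot> ide C (pcar A)"
    using g_t_cancel[OF fA] comp_ide_right[OF fA] by simp
  then obtain u where u: "u \<in> Hom C (pcar A) (pcar (bc A))" "pmap (bc A) \<cdot> u = t \<cdot> pmap A"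
    "bc_snd A \<cdot> u = ide C (pcar A)"
    using pullback_lift[OF pb comp_in_Hom[OF fA t_in_Hom] ide_in_Hom_dom[OF fA]] by blast
  then show "tbar A \<in> Hom C (pcar A) (pcar (bc A))" "pmap (bc A) \<cdot> tbar A = t \<cdot> pmap A"
    "bc_snd A \<cdot> tbar A = ide C (pcar A)"
    unfolding tbar_def the_pullback_lift[OF pb u] by auto
qed

lemma tbar_psec:
  assumes A: "pt_ob C Z A"
  shows "tbar A \<cdot> psec A = psec (bc A) \<cdot> t"
proof (rule pullback_eqI[OF bc_pullback[OF A]])
  note tb = tbar[OF A] and s = bc_sec[OF A] and d = pullbackD[OF bc_pullback[OF A]]
  have fA: "pmap A \<in> Hom C (pcar A) Z" and sA: "psec A \<in> Hom C Z (pcar A)"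
    and fs: "pmap A \<cdot> psec A = ide C Z" using pt_obD[OF A] by auto
  show "tbar A \<cdot> psec A \<in> Hom C Z (pcar (bc A))" "psec (bc A) \<cdot> t \<in> Hom C Z (pcar (bc A))"
    using comp_in_Hom tb s sA t_in_Hom by blast+
  show "pmap (bc A) \<cdot> tbar A \<cdot> psec A = pmap (bc A) \<cdot> psec (bc A) \<cdot> t"
    using comp_assoc[OF sA tb(1) d(3)] comp_assoc[OF t_in_Hom s(1) d(3)] tb s comp_assoc[OF sA fA t_in_Hom]
      fs comp_ide_left[OF t_in_Hom] comp_ide_right[OF t_in_Hom]
    by simp
  show "bc_snd A \<cdot> tbar A \<cdot> psec A = bc_snd A \<cdot> psec (bc A) \<cdot> t"
    using comp_assoc[OF sA tb(1) d(4)] comp_assoc[OF t_in_Hom s(1) d(4)] tb s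
      comp_assoc[OF t_in_Hom g_in_Hom sA] g_t comp_ide_left[OF sA] comp_ide_right[OF sA]
    by simp
qed

lemma bc_hom:
  assumes A: "pt_ob C Z A" and B: "pt_ob C Z B" and k: "k \<in> Hom C (pcar A) (pcar B)"
    and fk: "pmap B \<cdot> k = pmap A"
  shows "bc_map A B k \<in> Hom C (pcar (bc A)) (pcar (bc B))" "pmap (bc B) \<cdot> bc_map A B k = pmap (bc A)"
    "bc_snd B \<cdot> bc_map A B k = k \<cdot> bc_snd A"
proof -
  note dA = pullbackD[OF bc_pullback[OF A]]
  have fB: "pmap B \<in> Hom C (pcar B) Z" using pt_obD[OF B] by blast
  have "g \<cdot> pmap (bc A) = pmap B \<cdot> (k \<cdot> bc_snd A)" using dA comp_assoc[OF dA(4) k fB] fk by simp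
  then obtain u where u: "u \<in> Hom C (pcar (bc A)) (pcar (bc B))" "pmap (bc B) \<cdot> u = pmap (bc A)"
    "bc_snd B \<cdot> u = k \<cdot> bc_snd A"
    using pullback_lift[OF bc_pullback[OF B] dA(3) comp_in_Hom[OF dA(4) k]] by blast
  then show "bc_map A B k \<in> Hom C (pcar (bc A)) (pcar (bc B))" "pmap (bc B) \<cdot> bc_map A B k = pmap (bc A)"
    "bc_snd B \<cdot> bc_map A B k = k \<cdot> bc_snd A"
    unfolding bc_hom_eq the_pullback_lift[OF bc_pullback[OF B] u] by auto
qed

lemma bc_hom_unique:
  assumes "pt_ob C Z B" and u: "u \<in> Hom C (pcar (bc A)) (pcar (bc B))"
    "pmap (bc B) \<cdot> u = pmap (bc A)" "bc_snd B \<cdot> u = k \<cdot> bc_snd A"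
  shows "bc_map A B k = u"
  unfolding bc_hom_eq by (rule the_pullback_lift[OF bc_pullback[OF assms(1)] u])

lemma bc_hom_pt_hom:
  assumes k: "k \<in> pt_hom C Z A B"
  shows "bc_map A B k \<in> pt_hom C Y (bc A) (bc B)"
proof -
  note kd = pt_homD[OF k]
  have A: "pt_ob C Z A" and B: "pt_ob C Z B" and kH: "k \<in> Hom C (pcar A) (pcar B)" using kd by auto
  note u = bc_hom[OF A B kH] and sa = bc_sec[OF A] and sb = bc_sec[OF B]
  note dB = pullbackD[OF bc_pullback[OF B]] and dA = pullbackD[OF bc_pullback[OF A]]
  have sA: "psec A \<in> Hom C Z (pcar A)" using pt_obD[OF A] by blast
  have "bc_map A B k \<cdot> psec (bc A) = psec (bc B)"
  proof (rule pullback_eqI[OF bc_pullback[OF B]])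
    show "bc_map A B k \<cdot> psec (bc A) \<in> Hom C Y (pcar (bc B))" "psec (bc B) \<in> Hom C Y (pcar (bc B))"
      using comp_in_Hom u kd sa sb by blast+
    show "pmap (bc B) \<cdot> bc_map A B k \<cdot> psec (bc A) = pmap (bc B) \<cdot> psec (bc B)"
      using comp_assoc[OF sa(1) u(1) dB(3)] u kd sa sb by simp
    have "bc_snd B \<cdot> bc_map A B k \<cdot> psec (bc A) = k \<cdot> psec A \<cdot> g"
      using comp_assoc[OF sa(1) u(1) dB(4)] u kd comp_assoc[OF sa(1) dA(4) kH] sa by simp
    then show "bc_snd B \<cdot> bc_map A B k \<cdot> psec (bc A) = bc_snd B \<cdot> psec (bc B)"
      using comp_assoc[OF g_in_Hom sA kH] kd sb by simp
  qed
  then show ?thesis using bc_pt_ob[OF A] bc_pt_ob[OF B] u kd by (intro pt_homI) auto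
qed

lemma bc_hom_comp:
  assumes A: "pt_ob C Z A" and B: "pt_ob C Z B" and D: "pt_ob C Z D"
   and k1: "k1 \<in> Hom C (pcar A) (pcar B)" "pmap B \<cdot> k1 = pmap A"
   and k2: "k2 \<in> Hom C (pcar B) (pcar D)" "pmap D \<cdot> k2 = pmap B"
  shows "bc_map A D (k2 \<cdot> k1) = bc_map B D k2 \<cdot> bc_map A B k1"
proof (rule bc_hom_unique[OF D])
  note u1 = bc_hom[OF A B k1] and u2 = bc_hom[OF B D k2]
  note dD = pullbackD[OF bc_pullback[OF D]] and dB = pullbackD[OF bc_pullback[OF B]]
    and dA = pullbackD[OF bc_pullback[OF A]]
  show "bc_map B D k2 \<cdot> bc_map A B k1 \<in> Hom C (pcar (bc A)) (pcar (bc D))"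
    using comp_in_Hom u1 u2 by blast
  show "pmap (bc D) \<cdot> bc_map B D k2 \<cdot> bc_map A B k1 = pmap (bc A)"
    using comp_assoc[OF u1(1) u2(1) dD(3)] u1 u2 by simp
  show "bc_snd D \<cdot> bc_map B D k2 \<cdot> bc_map A B k1 = (k2 \<cdot> k1) \<cdot> bc_snd A"
    using comp_assoc[OF u1(1) u2(1) dD(4)] u1 u2 comp_assoc[OF u1(1) dB(4) k2(1)]
      comp_assoc[OF dA(4) k1(1) k2(1)]
    by simp
qed

lemma bc_hom_ide:
  assumes A: "pt_ob C Z A"
  shows "bc_map A A (ide C (pcar A)) = ide C (pcar (bc A))"
proof (rule bc_hom_unique[OF A])
  note dA = pullbackD[OF bc_pullback[OF A]]
  show "ide C (pcar (bc A)) \<in> Hom C (pcar (bc A)) (pcar (bc A))" using ide_in_Hom_dom[OF dA(3)] .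
  show "pmap (bc A) \<cdot> ide C (pcar (bc A)) = pmap (bc A)" using comp_ide_right[OF dA(3)] .
  show "bc_snd A \<cdot> ide C (pcar (bc A)) = ide C (pcar A) \<cdot> bc_snd A"
    using comp_ide_right[OF dA(4)] comp_ide_left[OF dA(4)] by simp
qed

lemma bc_hom_inj:
  assumes A: "pt_ob C Z A" and B: "pt_ob C Z B"
   and k1: "k1 \<in> Hom C (pcar A) (pcar B)" "pmap B \<cdot> k1 = pmap A"
   and k2: "k2 \<in> Hom C (pcar A) (pcar B)" "pmap B \<cdot> k2 = pmap A"
   and e: "bc_map A B k1 = bc_map A B k2"
  shows "k1 = k2"
proof -
  note tb = tbar[OF A] and dA = pullbackD[OF bc_pullback[OF A]]
  have "k1 = (k1 \<cdot> bc_snd A) \<cdot> tbar A" using comp_assoc[OF tb(1) dA(4) k1(1)] tb comp_ide_right[OF k1(1)] by simp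
  also have "\<dots> = (bc_snd B \<cdot> bc_map A B k2) \<cdot> tbar A" using bc_hom[OF A B k1] e by simp
  also have "\<dots> = k2"
    using bc_hom[OF A B k2] comp_assoc[OF tb(1) dA(4) k2(1)] tb comp_ide_right[OF k2(1)] by simp
  finally show ?thesis .
qed

lemma bc_hom_pt_mono:
  assumes m: "pt_mono C Z A B m"
  shows "pt_mono C Y (bc A) (bc B) (bc_map A B m)"
proof -
  have mh: "m \<in> pt_hom C Z A B" using m unfolding pt_mono_def by blast
  note md = pt_homD[OF mh]
  have A: "pt_ob C Z A" and B: "pt_ob C Z B" and mH: "m \<in> Hom C (pcar A) (pcar B)"
    and fm: "pmap B \<cdot> m = pmap A" using md by auto
  note u = bc_hom[OF A B mH fm]
  note dB = pullbackD[OF bc_pullback[OF B]] and dA = pullbackD[OF bc_pullback[OF A]]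
  have "mono C (pcar (bc A)) (pcar (bc B)) (bc_map A B m)" unfolding mono_def
  proof (intro conjI allI impI)
    show "bc_map A B m \<in> Hom C (pcar (bc A)) (pcar (bc B))" by (rule u(1))
    fix W x y assume x: "x \<in> Hom C W (pcar (bc A))" and y: "y \<in> Hom C W (pcar (bc A))"
      and e: "bc_map A B m \<cdot> x = bc_map A B m \<cdot> y"
    have e1: "pmap (bc A) \<cdot> x = pmap (bc A) \<cdot> y"
      using comp_assoc[OF x u(1) dB(3)] comp_assoc[OF y u(1) dB(3)] u e by metis
    have "m \<cdot> (bc_snd A \<cdot> x) = m \<cdot> (bc_snd A \<cdot> y)"
      using comp_assoc[OF x u(1) dB(4)] comp_assoc[OF y u(1) dB(4)] u e comp_assoc[OF x dA(4) mH]
        comp_assoc[OF y dA(4) mH]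
      by metis
    then have e2: "bc_snd A \<cdot> x = bc_snd A \<cdot> y"
      using mono_cancel[OF pt_mono_imp_mono[OF m]] comp_in_Hom x y dA by blast
    show "x = y" using pullback_eqI[OF bc_pullback[OF A] x y e1 e2] .
  qed
  then show ?thesis using mono_imp_pt_mono bc_hom_pt_hom[OF mh] by simp
qed

lemma bc_hom_pt_iso:
  assumes u: "pt_iso C Z A A' u"
  shows "pt_iso C Y (bc A) (bc A') (bc_map A A' u)"
proof -
  obtain w where w: "w \<in> pt_hom C Z A' A" "u \<in> pt_hom C Z A A'" "w \<cdot> u = ide C (pcar A)"
    "u \<cdot> w = ide C (pcar A')"
    using pt_isoD[OF u] by blast
  note wd = pt_homD[OF w(1)] and ud = pt_homD[OF w(2)]
  have A: "pt_ob C Z A" and A': "pt_ob C Z A'" using ud by auto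
  have "bc_map A' A w \<cdot> bc_map A A' u = ide C (pcar (bc A))"
    using bc_hom_comp[OF A A' A, of u w] wd ud w bc_hom_ide[OF A] by simp
  moreover have "bc_map A A' u \<cdot> bc_map A' A w = ide C (pcar (bc A'))"
    using bc_hom_comp[OF A' A A', of w u] wd ud w bc_hom_ide[OF A'] by simp
  ultimately show ?thesis unfolding pt_iso_def using bc_hom_pt_hom[OF w(1)] bc_hom_pt_hom[OF w(2)] by auto
qed

lemma sub_equiv_bc:
  assumes r: "(A, m) \<in> subrep C Z S B" and e: "sub_equiv C Z (A', m') (A, m)"
  shows "sub_equiv C Y (bc A', bc_map A' B m') (bc A, bc_map A B m)"
proof -
  obtain u where u: "pt_iso C Z A' A u" "m \<cdot> u = m'" using e unfolding sub_equiv_def by auto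
  have "u \<in> pt_hom C Z A' A" using u unfolding pt_iso_def by blast
  note ud = pt_homD[OF this] and md = pt_homD[OF subrep_pt_hom[OF r, simplified]]
  have "bc_map A B m \<cdot> bc_map A' A u = bc_map A' B m'"
    using bc_hom_comp[of A' A B u m] ud md u(2) by simp
  then show ?thesis unfolding sub_equiv_def using bc_hom_pt_iso[OF u(1)] by auto
qed


lemma bc_snd_comp_tbar_pt_hom:
  assumes A: "pt_ob C Z A" and B: "pt_ob C Z B" and h: "h \<in> pt_hom C Y (bc A) (bc B)"
  shows "bc_snd B \<cdot> (h \<cdot> tbar A) \<in> pt_hom C Z A B"
proof -
  note tb = tbar[OF A] and hd = pt_homD[OF h] and sa = bc_sec[OF A] and sb = bc_sec[OF B]
  note dB = pullbackD[OF bc_pullback[OF B]]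
  have hH: "h \<in> Hom C (pcar (bc A)) (pcar (bc B))" using hd by blast
  have fA: "pmap A \<in> Hom C (pcar A) Z" and sA: "psec A \<in> Hom C Z (pcar A)"
    and fB: "pmap B \<in> Hom C (pcar B) Z" and sB: "psec B \<in> Hom C Z (pcar B)"
    and fsB: "pmap B \<cdot> psec B = ide C Z" using pt_obD A B by auto
  have htb: "h \<cdot> tbar A \<in> Hom C (pcar A) (pcar (bc B))" using comp_in_Hom hH tb by blast
  have "pmap B \<cdot> (bc_snd B \<cdot> (h \<cdot> tbar A)) = g \<cdot> (pmap (bc B) \<cdot> (h \<cdot> tbar A))"
    using comp_assoc[OF htb dB(4) fB] dB(5) comp_assoc[OF htb dB(3) g_in_Hom] by simp
  also have "\<dots> = pmap A" using comp_assoc[OF tb(1) hH dB(3)] hd tb g_t_cancel[OF fA] by simp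
  finally have fk: "pmap B \<cdot> (bc_snd B \<cdot> (h \<cdot> tbar A)) = pmap A" .
  have "(bc_snd B \<cdot> (h \<cdot> tbar A)) \<cdot> psec A = bc_snd B \<cdot> (h \<cdot> (tbar A \<cdot> psec A))"
    using comp_assoc[OF sA htb dB(4)] comp_assoc[OF sA tb(1) hH] by simp
  also have "\<dots> = (bc_snd B \<cdot> psec (bc B)) \<cdot> t"
    using tbar_psec[OF A] comp_assoc[OF t_in_Hom sa(1) hH] hd comp_assoc[OF t_in_Hom sb(1) dB(4)] by simp
  also have "\<dots> = psec B" using sb comp_assoc[OF t_in_Hom g_in_Hom sB] g_t comp_ide_right[OF sB] by simp
  finally show ?thesis using A B comp_in_Hom[OF htb dB(4)] fk by (intro pt_homI) auto
qed

end

section \<open>Full faithfulness on \<open>\<Sigma>\<close>-points\<close>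

locale sigma_base_change = base_change +
  fixes Sig :: "'a \<Rightarrow> 'a \<Rightarrow> 'b \<Rightarrow> 'b \<Rightarrow> bool"
  assumes fibrational: "fibrational C Sig" and sigma_maltsev: "sigma_maltsev C Sig"
begin

lemma Sig_pullback:
  "Sig X Y' f s \<Longrightarrow> v \<in> Hom C Y'' Y' \<Longrightarrow> is_pullback C Y'' X Y' v f X' f' v' \<Longrightarrow> s' \<in> Hom C Y'' X' \<Longrightarrow>
    f' \<cdot> s' = ide C Y'' \<Longrightarrow> v' \<cdot> s' = s \<cdot> v \<Longrightarrow> Sig X' Y'' f' s'"
  using fibrational unfolding fibrational_def by blast

lemma Sig_split_epi: "Sig X Y' f s \<Longrightarrow> split_epi C X Y' f s"
  using fibrational unfolding fibrational_def by blast

lemma sig_ob_bc: "pt_ob C Z A \<Longrightarrow> sig_ob Sig Z A \<Longrightarrow> sig_ob Sig Y (bc A)"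
  unfolding sig_ob_def using Sig_pullback[OF _ g_in_Hom bc_pullback] bc_sec by blast

lemma sigma_maltsevD:
  "Sig X Y' f s \<Longrightarrow> split_epi C Y'' Y' v w \<Longrightarrow> is_pullback C Y'' X Y' v f X' p1 p2 \<Longrightarrow>
    s' \<in> Hom C Y'' X' \<Longrightarrow> p1 \<cdot> s' = ide C Y'' \<Longrightarrow> p2 \<cdot> s' = s \<cdot> v \<Longrightarrow>
    tb \<in> Hom C X X' \<Longrightarrow> p1 \<cdot> tb = w \<cdot> f \<Longrightarrow> p2 \<cdot> tb = ide C X \<Longrightarrow>
    jointly_ext_epic C Y'' X X' s' tb"
  using sigma_maltsev unfolding sigma_maltsev_def by blast

lemma jointly_ext_epic_bc_sec_tbar:
  assumes A: "pt_ob C Z A" and S: "sig_ob Sig Z A"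
  shows "jointly_ext_epic C Y (pcar A) (pcar (bc A)) (psec (bc A)) (tbar A)"
  using sigma_maltsevD[OF S[unfolded sig_ob_def] split_epi bc_pullback[OF A] bc_sec[OF A] tbar[OF A]] .

lemma bc_hom_surj:
  assumes A: "pt_ob C Z A" and S: "sig_ob Sig Z A" and B: "pt_ob C Z B"
   and h: "h \<in> pt_hom C Y (bc A) (bc B)"
  shows "bc_map A B (bc_snd B \<cdot> (h \<cdot> tbar A)) = h"
proof -
  define k where "k = bc_snd B \<cdot> (h \<cdot> tbar A)"
  have kh: "k \<in> pt_hom C Z A B" unfolding k_def using bc_snd_comp_tbar_pt_hom[OF A B h] .
  note kd = pt_homD[OF kh] and hd = pt_homD[OF h] and tb = tbar[OF A]
  have kH: "k \<in> Hom C (pcar A) (pcar B)" and fk: "pmap B \<cdot> k = pmap A" using kd by auto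
  note u = bc_hom[OF A B kH fk] and uh = pt_homD[OF bc_hom_pt_hom[OF kh]]
  note pB = bc_pullback[OF B] note dB = pullbackD[OF pB] and dA = pullbackD[OF bc_pullback[OF A]]
  have hH: "h \<in> Hom C (pcar (bc A)) (pcar (bc B))" using hd by blast
  have "h \<cdot> tbar A = bc_map A B k \<cdot> tbar A"
  proof (rule pullback_eqI[OF pB])
    show "h \<cdot> tbar A \<in> Hom C (pcar A) (pcar (bc B))" "bc_map A B k \<cdot> tbar A \<in> Hom C (pcar A) (pcar (bc B))"
      using comp_in_Hom hH u kd tb by blast+
    show "pmap (bc B) \<cdot> h \<cdot> tbar A = pmap (bc B) \<cdot> bc_map A B k \<cdot> tbar A"
      using comp_assoc[OF tb(1) hH dB(3)] comp_assoc[OF tb(1) u(1) dB(3)] hd u kd by simp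
    show "bc_snd B \<cdot> h \<cdot> tbar A = bc_snd B \<cdot> bc_map A B k \<cdot> tbar A"
      using comp_assoc[OF tb(1) u(1) dB(4)] u kd comp_assoc[OF tb(1) dA(4) kH] tb comp_ide_right[OF kH] k_def
      by simp
  qed
  moreover have "pmap (bc B) \<cdot> h = pmap (bc B) \<cdot> bc_map A B k" "h \<cdot> psec (bc A) = bc_map A B k \<cdot> psec (bc A)"
    using hd uh by auto
  ultimately have "h = bc_map A B k"
    using jointly_ext_epic_eqI[OF jointly_ext_epic_bc_sec_tbar[OF A S] hH u(1) dB(3)] by simp
  then show ?thesis unfolding k_def by simp
qed

lemma bc_full_faithful:
  assumes A: "pt_ob C Z A" and S: "sig_ob Sig Z A" and B: "pt_ob C Z B"
   and h: "h \<in> pt_hom C Y (bc A) (bc B)"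
  shows "\<exists>!k. k \<in> pt_hom C Z A B \<and> bc_map A B k = h"
proof (rule ex1I[of _ "bc_snd B \<cdot> (h \<cdot> tbar A)"])
  show "bc_snd B \<cdot> (h \<cdot> tbar A) \<in> pt_hom C Z A B \<and> bc_map A B (bc_snd B \<cdot> (h \<cdot> tbar A)) = h"
    using bc_snd_comp_tbar_pt_hom[OF A B h] bc_hom_surj[OF assms] by blast
  fix k assume k: "k \<in> pt_hom C Z A B \<and> bc_map A B k = h"
  note kd = pt_homD[OF conjunct1[OF k]] and k'd = pt_homD[OF bc_snd_comp_tbar_pt_hom[OF A B h]]
  show "k = bc_snd B \<cdot> (h \<cdot> tbar A)"
    using bc_hom_inj[OF A B _ _ _ _ trans[OF conjunct2[OF k] bc_hom_surj[OF assms, symmetric]]] kd k'd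
    by blast
qed

lemma bc_subrep:
  "(A, m) \<in> subrep C Z (sig_ob Sig Z) B \<Longrightarrow>
     (bc A, bc_map A B m) \<in> subrep C Y (sig_ob Sig Y) (bc B)"
  using subrepD[of "(A, m)"] sig_ob_bc bc_pt_ob bc_hom_pt_mono unfolding subrep_def by auto

lemma sub_equiv_bc_reflect:
  assumes r1: "(A1, m1) \<in> subrep C Z (sig_ob Sig Z) B" and r2: "(A2, m2) \<in> subrep C Z (sig_ob Sig Z) B"
    and e: "sub_equiv C Y (bc A1, bc_map A1 B m1) (bc A2, bc_map A2 B m2)"
  shows "sub_equiv C Z (A1, m1) (A2, m2)"
proof -
  note s1 = subrepD[OF r1, simplified] and s2 = subrepD[OF r2, simplified]
  note m1 = pt_homD[OF subrep_pt_hom[OF r1, simplified]] and m2 = subrep_pt_hom[OF r2, simplified]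
  have A1: "pt_ob C Z A1" and A2: "pt_ob C Z A2" and B: "pt_ob C Z B" using s1 s2 m1 by auto
  obtain h h' where h: "h \<in> pt_hom C Y (bc A1) (bc A2)" "bc_map A2 B m2 \<cdot> h = bc_map A1 B m1"
    and h': "h' \<in> pt_hom C Y (bc A2) (bc A1)" "h' \<cdot> h = ide C (pcar (bc A1))" "h \<cdot> h' = ide C (pcar (bc A2))"
    using e pt_isoD unfolding sub_equiv_def by (metis fst_conv snd_conv)
  obtain k where k: "k \<in> pt_hom C Z A1 A2" "bc_map A1 A2 k = h"
    using bc_full_faithful[OF A1 _ A2 h(1)] s1 by blast
  obtain k' where k': "k' \<in> pt_hom C Z A2 A1" "bc_map A2 A1 k' = h'"
    using bc_full_faithful[OF A2 _ A1 h'(1)] s2 by blast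
  have kH: "k \<in> Hom C (pcar A1) (pcar A2)" "pmap A2 \<cdot> k = pmap A1"
    and k'H: "k' \<in> Hom C (pcar A2) (pcar A1)" "pmap A1 \<cdot> k' = pmap A2"
    and m2H: "m2 \<in> Hom C (pcar A2) (pcar B)" "pmap B \<cdot> m2 = pmap A2"
    using pt_homD k(1) k'(1) m2 by auto
  have "bc_map A1 A1 (k' \<cdot> k) = bc_map A1 A1 (ide C (pcar A1))"
    using bc_hom_comp[OF A1 A2 A1 kH k'H] k(2) k'(2) h'(2) bc_hom_ide[OF A1] by simp
  then have "k' \<cdot> k = ide C (pcar A1)"
    using bc_hom_inj[OF A1 A1] pt_homD[OF pt_hom_comp[OF k(1) k'(1)]] pt_homD[OF pt_hom_ide[OF A1]]
    by blast
  moreover have "bc_map A2 A2 (k \<cdot> k') = bc_map A2 A2 (ide C (pcar A2))"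
    using bc_hom_comp[OF A2 A1 A2 k'H kH] k(2) k'(2) h'(3) bc_hom_ide[OF A2] by simp
  then have "k \<cdot> k' = ide C (pcar A2)"
    using bc_hom_inj[OF A2 A2] pt_homD[OF pt_hom_comp[OF k'(1) k(1)]] pt_homD[OF pt_hom_ide[OF A2]]
    by blast
  moreover have "bc_map A1 B (m2 \<cdot> k) = bc_map A1 B m1"
    using bc_hom_comp[OF A1 A2 B kH m2H] k(2) h(2) by simp
  then have "m2 \<cdot> k = m1"
    using bc_hom_inj[OF A1 B] pt_homD[OF pt_hom_comp[OF k(1) m2]] m1 by blast
  ultimately show ?thesis unfolding sub_equiv_def pt_iso_def using k k' by auto
qed

section \<open>\<open>\<Sigma>\<close>-subobjects of a base change\<close>

lemma kernel_pair_maltsev: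
  assumes S: "Sig W Y d \<sigma>" and pR: "is_pullback C Y Y Z g g R \<pi>1 \<pi>2"
    and \<delta>: "\<delta> \<in> Hom C Y R" "\<pi>1 \<cdot> \<delta> = ide C Y" "\<pi>2 \<cdot> \<delta> = ide C Y"
    and pX: "is_pullback C R W Y \<pi>2 d X' p1 p2"
  obtains s' tb where "s' \<in> Hom C R X'" "p1 \<cdot> s' = ide C R" "p2 \<cdot> s' = \<sigma> \<cdot> \<pi>2"
    "tb \<in> Hom C W X'" "p1 \<cdot> tb = \<delta> \<cdot> d" "p2 \<cdot> tb = ide C W" "jointly_ext_epic C R W X' s' tb"
proof -
  note dR = pullbackD[OF pR]
  have dH: "d \<in> Hom C W Y" and \<sigma>H: "\<sigma> \<in> Hom C Y W" and d\<sigma>: "d \<cdot> \<sigma> = ide C Y"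
    using Sig_split_epi[OF S] unfolding split_epi_def by auto
  have "\<pi>2 \<cdot> ide C R = d \<cdot> (\<sigma> \<cdot> \<pi>2)"
    using comp_ide_right[OF dR(4)] comp_assoc[OF dR(4) \<sigma>H dH] d\<sigma> comp_ide_left[OF dR(4)] by simp
  then obtain s' where s': "s' \<in> Hom C R X'" "p1 \<cdot> s' = ide C R" "p2 \<cdot> s' = \<sigma> \<cdot> \<pi>2"
    using pullback_lift[OF pX ide_in_Hom_dom[OF dR(3)] comp_in_Hom[OF dR(4) \<sigma>H]] by blast
  have "\<pi>2 \<cdot> (\<delta> \<cdot> d) = d \<cdot> ide C W"
    using comp_assoc[OF dH \<delta>(1) dR(4)] \<delta> comp_ide_left[OF dH] comp_ide_right[OF dH] by simp
  then obtain tb where tb: "tb \<in> Hom C W X'" "p1 \<cdot> tb = \<delta> \<cdot> d" "p2 \<cdot> tb = ide C W"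
    using pullback_lift[OF pX comp_in_Hom[OF dH \<delta>(1)] ide_in_Hom_dom[OF dH]] by blast
  have "split_epi C R Y \<pi>2 \<delta>" unfolding split_epi_def using dR \<delta> by blast
  then have "jointly_ext_epic C R W X' s' tb" by (rule sigma_maltsevD[OF S _ pX s' tb])
  with s' tb that show ?thesis by blast
qed

end

locale sig_subobject_of_bc = sigma_base_change +
  fixes B D :: "('a,'b) pt" and n :: 'b
  assumes B: "pt_ob C Z B" and sub: "(D, n) \<in> subrep C Y (sig_ob Sig Y) (bc B)"
begin

lemma D_Sig: "Sig (pcar D) Y (pmap D) (psec D)"
  using subrepD[OF sub] unfolding sig_ob_def by simp

lemma D_pt_ob: "pt_ob C Y D"
  using subrepD[OF sub] by simp

lemma n_mono: "mono C (pcar D) (pcar (bc B)) n"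
  using subrepD[OF sub] by (auto intro: pt_mono_imp_mono)

lemma n_hom: "n \<in> Hom C (pcar D) (pcar (bc B))" "pmap (bc B) \<cdot> n = pmap D" "n \<cdot> psec D = psec (bc B)"
  using pt_homD[OF subrep_pt_hom[OF sub]] by auto

lemma D_split: "pmap D \<in> Hom C (pcar D) Y" "psec D \<in> Hom C Y (pcar D)" "pmap D \<cdot> psec D = ide C Y"
  using pt_obD[OF D_pt_ob] by auto

lemma n_comp_fst: "x \<in> Hom C Q (pcar D) \<Longrightarrow> pmap (bc B) \<cdot> (n \<cdot> x) = pmap D \<cdot> x"
  using comp_assoc[OF _ n_hom(1) pullbackD(3)[OF bc_pullback[OF B]]] n_hom(2) by metis

lemma bc_snd_n_psec:
  assumes \<pi>: "\<pi> \<in> Hom C Q Y"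
  shows "bc_snd B \<cdot> (n \<cdot> (psec D \<cdot> \<pi>)) = psec B \<cdot> (g \<cdot> \<pi>)"
proof -
  note sb = bc_sec[OF B] and dB = pullbackD[OF bc_pullback[OF B]]
  have sB: "psec B \<in> Hom C Z (pcar B)" using pt_obD[OF B] by blast
  show ?thesis
    using comp_assoc[OF \<pi> D_split(2) n_hom(1)] n_hom(3) comp_assoc[OF \<pi> sb(1) dB(4)] sb(3) comp_assoc[OF \<pi> g_in_Hom sB]
    by simp
qed

lemma kernel_pair_lift:
  assumes pR: "is_pullback C Y Y Z g g R \<pi>1 \<pi>2" and pX: "is_pullback C R (pcar D) Y \<pi>2 (pmap D) X' p1 p2"
  obtains \<theta> where "\<theta> \<in> Hom C X' (pcar (bc B))" "pmap (bc B) \<cdot> \<theta> = \<pi>1 \<cdot> p1"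
    "bc_snd B \<cdot> \<theta> = bc_snd B \<cdot> (n \<cdot> p2)"
proof -
  note pB = bc_pullback[OF B] note dB = pullbackD[OF pB] and dR = pullbackD[OF pR] and dX = pullbackD[OF pX]
  have fB: "pmap B \<in> Hom C (pcar B) Z" using pt_obD[OF B] by blast
  have np2: "n \<cdot> p2 \<in> Hom C X' (pcar (bc B))" using comp_in_Hom dX n_hom by blast
  have "g \<cdot> (\<pi>1 \<cdot> p1) = g \<cdot> (\<pi>2 \<cdot> p1)"
    using comp_assoc[OF dX(3) dR(3) g_in_Hom] comp_assoc[OF dX(3) dR(4) g_in_Hom] dR(5) by simp
  also have "\<dots> = g \<cdot> (pmap (bc B) \<cdot> (n \<cdot> p2))" using dX(5) n_comp_fst[OF dX(4)] by simp
  also have "\<dots> = pmap B \<cdot> (bc_snd B \<cdot> (n \<cdot> p2))"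
    using comp_assoc[OF np2 dB(3) g_in_Hom] comp_assoc[OF np2 dB(4) fB] dB(5) by simp
  finally show ?thesis
    using that pullback_lift[OF pB comp_in_Hom[OF dX(3) dR(3)] comp_in_Hom[OF np2 dB(4)]] by blast
qed

text \<open>The core of the argument: on \<open>R \<times>\<^sub>Y D\<close>, with \<open>R\<close> the kernel pair of \<open>g\<close>, the map
  \<open>\<theta> = (\<pi>\<^sub>1 p\<^sub>1, bc_snd B n p\<^sub>2)\<close> into \<open>g\<^sup>*(B)\<close> agrees with a map through \<open>n\<close> on both
  members of the jointly extremally epic pair, hence factors through \<open>n\<close>.\<close>
lemma kernel_pair_lift_through_n:
  assumes pR: "is_pullback C Y Y Z g g R \<pi>1 \<pi>2"
    and \<delta>: "\<delta> \<in> Hom C Y R" "\<pi>1 \<cdot> \<delta> = ide C Y" "\<pi>2 \<cdot> \<delta> = ide C Y"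
    and pX: "is_pullback C R (pcar D) Y \<pi>2 (pmap D) X' p1 p2"
  shows "\<exists>\<rho>\<in>Hom C X' (pcar D). pmap (bc B) \<cdot> (n \<cdot> \<rho>) = \<pi>1 \<cdot> p1 \<and> bc_snd B \<cdot> (n \<cdot> \<rho>) = bc_snd B \<cdot> (n \<cdot> p2)"
proof -
  obtain s' tb where s': "s' \<in> Hom C R X'" "p1 \<cdot> s' = ide C R" "p2 \<cdot> s' = psec D \<cdot> \<pi>2"
    and tb: "tb \<in> Hom C (pcar D) X'" "p1 \<cdot> tb = \<delta> \<cdot> pmap D" "p2 \<cdot> tb = ide C (pcar D)"
    and j: "jointly_ext_epic C R (pcar D) X' s' tb"
    using kernel_pair_maltsev[OF D_Sig pR \<delta> pX] by blast
  obtain \<theta> where \<theta>: "\<theta> \<in> Hom C X' (pcar (bc B))" "pmap (bc B) \<cdot> \<theta> = \<pi>1 \<cdot> p1"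
    "bc_snd B \<cdot> \<theta> = bc_snd B \<cdot> (n \<cdot> p2)"
    using kernel_pair_lift[OF pR pX] by blast
  note pB = bc_pullback[OF B] note dB = pullbackD[OF pB] and dR = pullbackD[OF pR] and dX = pullbackD[OF pX]
  have np2: "n \<cdot> p2 \<in> Hom C X' (pcar (bc B))" using comp_in_Hom dX n_hom by blast
  have \<sigma>\<pi>: "psec D \<cdot> \<pi> \<in> Hom C R (pcar D)" if "\<pi> \<in> Hom C R Y" for \<pi>
    using comp_in_Hom[OF that D_split(2)] .
  have "\<theta> \<cdot> s' = n \<cdot> (psec D \<cdot> \<pi>1)"
  proof (rule pullback_eqI[OF pB])
    show "\<theta> \<cdot> s' \<in> Hom C R (pcar (bc B))" "n \<cdot> (psec D \<cdot> \<pi>1) \<in> Hom C R (pcar (bc B))"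
      using comp_in_Hom \<theta> s' n_hom \<sigma>\<pi>[OF dR(3)] by blast+
    show "pmap (bc B) \<cdot> \<theta> \<cdot> s' = pmap (bc B) \<cdot> n \<cdot> psec D \<cdot> \<pi>1"
      using comp_assoc[OF s'(1) \<theta>(1) dB(3)] \<theta> comp_assoc[OF s'(1) dX(3) dR(3)] s' comp_ide_right[OF dR(3)]
        n_comp_fst[OF \<sigma>\<pi>[OF dR(3)]] comp_assoc[OF dR(3) D_split(2) D_split(1)] D_split(3) comp_ide_left[OF dR(3)]
      by simp
    have "bc_snd B \<cdot> \<theta> \<cdot> s' = bc_snd B \<cdot> n \<cdot> psec D \<cdot> \<pi>2"
      using comp_assoc[OF s'(1) \<theta>(1) dB(4)] \<theta> comp_assoc[OF s'(1) np2 dB(4)] comp_assoc[OF s'(1) dX(4) n_hom(1)] s'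
      by simp
    then show "bc_snd B \<cdot> \<theta> \<cdot> s' = bc_snd B \<cdot> n \<cdot> psec D \<cdot> \<pi>1"
      using bc_snd_n_psec[OF dR(3)] bc_snd_n_psec[OF dR(4)] dR(5) by simp
  qed
  moreover have "\<theta> \<cdot> tb = n \<cdot> ide C (pcar D)"
  proof (rule pullback_eqI[OF pB])
    show "\<theta> \<cdot> tb \<in> Hom C (pcar D) (pcar (bc B))" "n \<cdot> ide C (pcar D) \<in> Hom C (pcar D) (pcar (bc B))"
      using comp_in_Hom \<theta> tb comp_ide_right[OF n_hom(1)] n_hom by auto
    show "pmap (bc B) \<cdot> \<theta> \<cdot> tb = pmap (bc B) \<cdot> n \<cdot> ide C (pcar D)"
      using comp_assoc[OF tb(1) \<theta>(1) dB(3)] \<theta> comp_assoc[OF tb(1) dX(3) dR(3)] tb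
        comp_assoc[OF D_split(1) \<delta>(1) dR(3)] \<delta> comp_ide_left[OF D_split(1)] comp_ide_right[OF n_hom(1)] n_hom
      by simp
    show "bc_snd B \<cdot> \<theta> \<cdot> tb = bc_snd B \<cdot> n \<cdot> ide C (pcar D)"
      using comp_assoc[OF tb(1) \<theta>(1) dB(4)] \<theta> comp_assoc[OF tb(1) np2 dB(4)] comp_assoc[OF tb(1) dX(4) n_hom(1)]
        tb comp_ide_right[OF n_hom(1)]
      by simp
  qed
  ultimately obtain \<rho> where "\<rho> \<in> Hom C X' (pcar D)" "n \<cdot> \<rho> = \<theta>"
    using jointly_ext_epic_factor[OF j n_mono \<theta>(1) \<sigma>\<pi>[OF dR(3)] ide_in_Hom_dom[OF D_split(1)]] by blast
  then show ?thesis using \<theta> by blast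
qed

text \<open>\<open>n\<close> is closed under moving the \<open>Y\<close>-coordinate within a fibre of \<open>g\<close>.\<close>
lemma lift_through_n:
  assumes y: "y \<in> Hom C Q Y" and w: "w \<in> Hom C Q (pcar D)" and e: "g \<cdot> y = g \<cdot> (pmap D \<cdot> w)"
  shows "\<exists>w'\<in>Hom C Q (pcar D). pmap (bc B) \<cdot> (n \<cdot> w') = y \<and> bc_snd B \<cdot> (n \<cdot> w') = bc_snd B \<cdot> (n \<cdot> w)"
proof -
  obtain R \<pi>1 \<pi>2 where pR: "is_pullback C Y Y Z g g R \<pi>1 \<pi>2" using pullback_exists g_in_Hom by blast
  note dR = pullbackD[OF pR]
  obtain \<delta> where \<delta>: "\<delta> \<in> Hom C Y R" "\<pi>1 \<cdot> \<delta> = ide C Y" "\<pi>2 \<cdot> \<delta> = ide C Y"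
    using pullback_lift[OF pR ide_Y ide_Y] by blast
  obtain X' p1 p2 where pX: "is_pullback C R (pcar D) Y \<pi>2 (pmap D) X' p1 p2"
    using pullback_exists dR D_split by blast
  note dX = pullbackD[OF pX]
  obtain \<rho> where \<rho>: "\<rho> \<in> Hom C X' (pcar D)" "pmap (bc B) \<cdot> (n \<cdot> \<rho>) = \<pi>1 \<cdot> p1"
    "bc_snd B \<cdot> (n \<cdot> \<rho>) = bc_snd B \<cdot> (n \<cdot> p2)"
    using kernel_pair_lift_through_n[OF pR \<delta> pX] by blast
  obtain \<zeta> where \<zeta>: "\<zeta> \<in> Hom C Q R" "\<pi>1 \<cdot> \<zeta> = y" "\<pi>2 \<cdot> \<zeta> = pmap D \<cdot> w"
    using pullback_lift[OF pR y comp_in_Hom[OF w D_split(1)] e] by blast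
  obtain \<xi> where \<xi>: "\<xi> \<in> Hom C Q X'" "p1 \<cdot> \<xi> = \<zeta>" "p2 \<cdot> \<xi> = w"
    using pullback_lift[OF pX \<zeta>(1) w] \<zeta> by blast
  note dB = pullbackD[OF bc_pullback[OF B]]
  have np2: "n \<cdot> p2 \<in> Hom C X' (pcar (bc B))" using comp_in_Hom dX n_hom by blast
  have "pmap (bc B) \<cdot> (n \<cdot> (\<rho> \<cdot> \<xi>)) = y"
    using comp_assoc[OF \<xi>(1) \<rho>(1) n_hom(1)] comp_assoc[OF \<xi>(1) comp_in_Hom[OF \<rho>(1) n_hom(1)] dB(3)] \<rho>
      comp_assoc[OF \<xi>(1) dX(3) dR(3)] \<xi> \<zeta>
    by simp
  moreover have "bc_snd B \<cdot> (n \<cdot> (\<rho> \<cdot> \<xi>)) = bc_snd B \<cdot> (n \<cdot> w)"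
    using comp_assoc[OF \<xi>(1) \<rho>(1) n_hom(1)] comp_assoc[OF \<xi>(1) comp_in_Hom[OF \<rho>(1) n_hom(1)] dB(4)] \<rho>
      comp_assoc[OF \<xi>(1) np2 dB(4)] comp_assoc[OF \<xi>(1) dX(4) n_hom(1)] \<xi>
    by simp
  ultimately show ?thesis using comp_in_Hom[OF \<xi>(1) \<rho>(1)] by blast
qed

lemma tbar_bc_snd_n:
  assumes x: "x \<in> Hom C Q (pcar D)" and ex: "pmap D \<cdot> x = t \<cdot> (g \<cdot> (pmap D \<cdot> x))"
  shows "tbar B \<cdot> (bc_snd B \<cdot> (n \<cdot> x)) = n \<cdot> x"
proof (rule pullback_eqI[OF bc_pullback[OF B]])
  note dB = pullbackD[OF bc_pullback[OF B]] and tb = tbar[OF B]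
  have fB: "pmap B \<in> Hom C (pcar B) Z" using pt_obD[OF B] by blast
  have nx: "n \<cdot> x \<in> Hom C Q (pcar (bc B))" using comp_in_Hom x n_hom by blast
  have rnx: "bc_snd B \<cdot> (n \<cdot> x) \<in> Hom C Q (pcar B)" using comp_in_Hom nx dB by blast
  show "tbar B \<cdot> bc_snd B \<cdot> n \<cdot> x \<in> Hom C Q (pcar (bc B))" "n \<cdot> x \<in> Hom C Q (pcar (bc B))"
    using comp_in_Hom rnx tb nx by blast+
  have "pmap (bc B) \<cdot> (tbar B \<cdot> (bc_snd B \<cdot> (n \<cdot> x))) = t \<cdot> (pmap B \<cdot> (bc_snd B \<cdot> (n \<cdot> x)))"
    using comp_assoc[OF rnx tb(1) dB(3)] tb comp_assoc[OF rnx fB t_in_Hom] by simp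
  also have "\<dots> = t \<cdot> (g \<cdot> (pmap (bc B) \<cdot> (n \<cdot> x)))"
    using comp_assoc[OF nx dB(4) fB] comp_assoc[OF nx dB(3) g_in_Hom] dB(5) by simp
  also have "\<dots> = pmap (bc B) \<cdot> (n \<cdot> x)" using n_comp_fst[OF x] ex by simp
  finally show "pmap (bc B) \<cdot> tbar B \<cdot> bc_snd B \<cdot> n \<cdot> x = pmap (bc B) \<cdot> n \<cdot> x" .
  show "bc_snd B \<cdot> tbar B \<cdot> bc_snd B \<cdot> n \<cdot> x = bc_snd B \<cdot> n \<cdot> x"
    using comp_assoc[OF rnx tb(1) dB(4)] tb comp_ide_left[OF rnx] by simp
qed

text \<open>The candidate preimage of \<open>n\<close>: its pullback along \<open>tbar B\<close>, a point over \<open>Z\<close> with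
  the section induced by \<open>psec B\<close> and \<open>psec D \<cdot> t\<close>.\<close>
definition "restr = pb C (pcar B) (pcar D) (pcar (bc B)) (tbar B) n"
definition "res_incl = fst (snd restr)"
definition "res_proj = snd (snd restr)"
definition "res_sec = (THE s. s \<in> Hom C Z (fst restr) \<and> res_incl \<cdot> s = psec B \<and> res_proj \<cdot> s = psec D \<cdot> t)"
definition "res = (fst restr, pmap B \<cdot> res_incl, res_sec)"

lemma res_pullback: "is_pullback C (pcar B) (pcar D) (pcar (bc B)) (tbar B) n (pcar res) res_incl res_proj"
  unfolding res_def res_incl_def res_proj_def restr_def using pb_is_pullback tbar[OF B] n_hom by simp

lemma res_sec: "psec res \<in> Hom C Z (pcar res)" "res_incl \<cdot> psec res = psec B" "res_proj \<cdot> psec res = psec D \<cdot> t"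
proof -
  have sB: "psec B \<in> Hom C Z (pcar B)" using pt_obD[OF B] by blast
  have "tbar B \<cdot> psec B = n \<cdot> (psec D \<cdot> t)" using tbar_psec[OF B] comp_assoc[OF t_in_Hom D_split(2) n_hom(1)] n_hom by simp
  then obtain s where s: "s \<in> Hom C Z (pcar res)" "res_incl \<cdot> s = psec B" "res_proj \<cdot> s = psec D \<cdot> t"
    using pullback_lift[OF res_pullback sB comp_in_Hom[OF t_in_Hom D_split(2)]] by blast
  have "psec res = s" unfolding res_def res_sec_def using the_pullback_lift[OF res_pullback s] by (simp add: res_def)
  then show "psec res \<in> Hom C Z (pcar res)" "res_incl \<cdot> psec res = psec B" "res_proj \<cdot> psec res = psec D \<cdot> t"
    using s by auto
qed

lemma res_pmap: "pmap res = pmap B \<cdot> res_incl"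
  unfolding res_def by simp

lemma res_pt_ob: "pt_ob C Z res"
proof -
  note dA = pullbackD[OF res_pullback]
  have fB: "pmap B \<in> Hom C (pcar B) Z" and "pmap B \<cdot> psec B = ide C Z" using pt_obD[OF B] by auto
  then show ?thesis unfolding pt_ob_def split_epi_def res_pmap
    using comp_in_Hom[OF dA(3) fB] res_sec comp_assoc[OF res_sec(1) dA(3) fB] by simp
qed

lemma res_proj_fst: "pmap D \<cdot> res_proj = t \<cdot> pmap res"
proof -
  note dA = pullbackD[OF res_pullback] and dB = pullbackD[OF bc_pullback[OF B]] and tb = tbar[OF B]
  have fB: "pmap B \<in> Hom C (pcar B) Z" using pt_obD[OF B] by blast
  have "pmap D \<cdot> res_proj = pmap (bc B) \<cdot> (tbar B \<cdot> res_incl)" using n_comp_fst[OF dA(4)] dA(5) by simp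
  also have "\<dots> = t \<cdot> pmap res" using comp_assoc[OF dA(3) tb(1) dB(3)] tb comp_assoc[OF dA(3) fB t_in_Hom] res_pmap
    by simp
  finally show ?thesis .
qed

lemma res_pullback_along_t: "is_pullback C Z (pcar D) Y t (pmap D) (pcar res) (pmap res) res_proj"
  unfolding is_pullback_def
proof (intro conjI allI impI)
  note pA = res_pullback note dA = pullbackD[OF pA] and dB = pullbackD[OF bc_pullback[OF B]] and tb = tbar[OF B]
  have fB: "pmap B \<in> Hom C (pcar B) Z" using pt_obD[OF B] by blast
  show "t \<in> Hom C Z Y" "pmap D \<in> Hom C (pcar D) Y" "pmap res \<in> Hom C (pcar res) Z" "res_proj \<in> Hom C (pcar res) (pcar D)"
    using t_in_Hom D_split(1) comp_in_Hom[OF dA(3) fB] dA res_pmap by auto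
  show "t \<cdot> pmap res = pmap D \<cdot> res_proj" using res_proj_fst by simp
  fix Q z w assume z: "z \<in> Hom C Q Z" and w: "w \<in> Hom C Q (pcar D)" and e: "t \<cdot> z = pmap D \<cdot> w"
  have nw: "n \<cdot> w \<in> Hom C Q (pcar (bc B))" using comp_in_Hom w n_hom by blast
  have "pmap D \<cdot> w = t \<cdot> (g \<cdot> (pmap D \<cdot> w))" using e[symmetric] g_t_cancel[OF z] by simp
  then obtain u where u: "u \<in> Hom C Q (pcar res)" "res_incl \<cdot> u = bc_snd B \<cdot> (n \<cdot> w)" "res_proj \<cdot> u = w"
    using pullback_lift[OF pA comp_in_Hom[OF nw dB(4)] w] tbar_bc_snd_n[OF w] by metis
  have "pmap res \<cdot> u = g \<cdot> (pmap (bc B) \<cdot> (n \<cdot> w))"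
    using res_pmap comp_assoc[OF u(1) dA(3) fB] u comp_assoc[OF nw dB(4) fB] comp_assoc[OF nw dB(3) g_in_Hom] dB(5)
    by simp
  also have "\<dots> = z" using n_comp_fst[OF w] e g_t_cancel[OF z] by simp
  finally have ex: "u \<in> Hom C Q (pcar res) \<and> pmap res \<cdot> u = z \<and> res_proj \<cdot> u = w" using u by blast
  have "v = u" if v: "v \<in> Hom C Q (pcar res)" "res_proj \<cdot> v = w" for v
  proof (rule pullback_eqI[OF pA v(1) u(1)])
    have av: "res_incl \<cdot> v \<in> Hom C Q (pcar B)" using comp_in_Hom[OF v(1) dA(3)] .
    have "res_incl \<cdot> v = bc_snd B \<cdot> (tbar B \<cdot> (res_incl \<cdot> v))"
      using comp_assoc[OF av tb(1) dB(4)] tb comp_ide_left[OF av] by simp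
    also have "\<dots> = bc_snd B \<cdot> (n \<cdot> w)"
      using comp_assoc[OF v(1) dA(3) tb(1)] comp_assoc[OF v(1) dA(4) n_hom(1)] dA(5) v(2) by simp
    finally show "res_incl \<cdot> v = res_incl \<cdot> u" using u by simp
    show "res_proj \<cdot> v = res_proj \<cdot> u" using u v by simp
  qed
  with ex show "\<exists>!u. u \<in> Hom C Q (pcar res) \<and> pmap res \<cdot> u = z \<and> res_proj \<cdot> u = w" by blast
qed

lemma res_subrep: "(res, res_incl) \<in> subrep C Z (sig_ob Sig Z) B"
proof -
  have "sig_ob Sig Z res"
    unfolding sig_ob_def using Sig_pullback[OF D_Sig t_in_Hom res_pullback_along_t] res_pt_ob res_sec
    unfolding pt_ob_def split_epi_def by blast
  moreover have "res_incl \<in> pt_hom C Z res B"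
    using res_pt_ob B pullbackD[OF res_pullback] res_sec res_pmap by (intro pt_homI) auto
  ultimately show ?thesis
    unfolding subrep_def using res_pt_ob mono_imp_pt_mono pullback_mono[OF res_pullback n_mono] by simp
qed

lemma res_incl_in_Hom: "res_incl \<in> Hom C (pcar res) (pcar B)" "pmap B \<cdot> res_incl = pmap res"
  using pullbackD[OF res_pullback] res_pmap by auto

lemma bc_res_factors_through_n:
  "\<exists>\<phi>\<in>Hom C (pcar (bc res)) (pcar D). n \<cdot> \<phi> = bc_map res B res_incl"
proof -
  note u = bc_hom[OF res_pt_ob B res_incl_in_Hom] and pB = bc_pullback[OF B]
  note dB = pullbackD[OF pB] and dP = pullbackD[OF bc_pullback[OF res_pt_ob]] and dA = pullbackD[OF res_pullback]
  have fr: "pmap res \<in> Hom C (pcar res) Z" using pt_obD[OF res_pt_ob] by blast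
  have pr: "res_proj \<cdot> bc_snd res \<in> Hom C (pcar (bc res)) (pcar D)" using comp_in_Hom dA dP by blast
  have "pmap D \<cdot> (res_proj \<cdot> bc_snd res) = t \<cdot> (g \<cdot> pmap (bc res))"
    using comp_assoc[OF dP(4) dA(4) D_split(1)] res_proj_fst comp_assoc[OF dP(4) fr t_in_Hom] dP(5) by simp
  then have "g \<cdot> pmap (bc res) = g \<cdot> (pmap D \<cdot> (res_proj \<cdot> bc_snd res))"
    using g_t_cancel[OF comp_in_Hom[OF dP(3) g_in_Hom]] by simp
  then obtain \<phi> where \<phi>: "\<phi> \<in> Hom C (pcar (bc res)) (pcar D)" "pmap (bc B) \<cdot> (n \<cdot> \<phi>) = pmap (bc res)"
    "bc_snd B \<cdot> (n \<cdot> \<phi>) = bc_snd B \<cdot> (n \<cdot> (res_proj \<cdot> bc_snd res))"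
    using lift_through_n[OF dP(3) pr] by blast
  have "n \<cdot> \<phi> = bc_map res B res_incl"
  proof (rule pullback_eqI[OF pB])
    show "n \<cdot> \<phi> \<in> Hom C (pcar (bc res)) (pcar (bc B))" using comp_in_Hom \<phi> n_hom by blast
    show "bc_map res B res_incl \<in> Hom C (pcar (bc res)) (pcar (bc B))" using u by blast
    show "pmap (bc B) \<cdot> n \<cdot> \<phi> = pmap (bc B) \<cdot> bc_map res B res_incl" using \<phi> u by simp
    have ra: "res_incl \<cdot> bc_snd res \<in> Hom C (pcar (bc res)) (pcar B)" using comp_in_Hom dP dA by blast
    have "bc_snd B \<cdot> (n \<cdot> (res_proj \<cdot> bc_snd res)) = bc_snd B \<cdot> (tbar B \<cdot> (res_incl \<cdot> bc_snd res))"
      using comp_assoc[OF dP(4) dA(4) n_hom(1)] comp_assoc[OF dP(4) dA(3) tbar(1)[OF B]] dA(5) by simp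
    also have "\<dots> = res_incl \<cdot> bc_snd res"
      using comp_assoc[OF ra tbar(1)[OF B] dB(4)] tbar[OF B] comp_ide_left[OF ra] by simp
    finally show "bc_snd B \<cdot> n \<cdot> \<phi> = bc_snd B \<cdot> bc_map res B res_incl" using \<phi> u by simp
  qed
  then show ?thesis using \<phi>(1) by blast
qed

lemma n_factors_through_bc_res:
  "\<exists>\<psi>\<in>Hom C (pcar D) (pcar (bc res)). bc_map res B res_incl \<cdot> \<psi> = n"
proof -
  note u = bc_hom[OF res_pt_ob B res_incl_in_Hom] and pB = bc_pullback[OF B]
  note dB = pullbackD[OF pB] and dA = pullbackD[OF res_pullback] and pP = bc_pullback[OF res_pt_ob]
  note dP = pullbackD[OF pP]
  have fB: "pmap B \<in> Hom C (pcar B) Z" using pt_obD[OF B] by blast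
  have gd: "g \<cdot> pmap D \<in> Hom C (pcar D) Z" using comp_in_Hom D_split(1) g_in_Hom by blast
  have iD: "ide C (pcar D) \<in> Hom C (pcar D) (pcar D)" using ide_in_Hom_dom[OF D_split(1)] .
  have "g \<cdot> (t \<cdot> (g \<cdot> pmap D)) = g \<cdot> (pmap D \<cdot> ide C (pcar D))"
    using g_t_cancel[OF gd] comp_ide_right[OF D_split(1)] by simp
  then obtain w where w: "w \<in> Hom C (pcar D) (pcar D)" "pmap (bc B) \<cdot> (n \<cdot> w) = t \<cdot> (g \<cdot> pmap D)"
    "bc_snd B \<cdot> (n \<cdot> w) = bc_snd B \<cdot> (n \<cdot> ide C (pcar D))"
    using lift_through_n[OF comp_in_Hom[OF gd t_in_Hom] iD] by blast
  have "pmap D \<cdot> w = t \<cdot> (g \<cdot> (pmap D \<cdot> w))" using n_comp_fst[OF w(1)] w(2) g_t_cancel[OF gd] by simp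
  then have "tbar B \<cdot> (bc_snd B \<cdot> n) = n \<cdot> w"
    using tbar_bc_snd_n[OF w(1)] w(3) comp_ide_right[OF n_hom(1)] by simp
  then obtain \<alpha> where \<alpha>: "\<alpha> \<in> Hom C (pcar D) (pcar res)" "res_incl \<cdot> \<alpha> = bc_snd B \<cdot> n" "res_proj \<cdot> \<alpha> = w"
    using pullback_lift[OF res_pullback comp_in_Hom[OF n_hom(1) dB(4)] w(1)] by blast
  have "g \<cdot> pmap D = pmap res \<cdot> \<alpha>"
    using res_pmap comp_assoc[OF \<alpha>(1) dA(3) fB] \<alpha> comp_assoc[OF n_hom(1) dB(4) fB] dB(5)
      comp_assoc[OF n_hom(1) dB(3) g_in_Hom] n_hom(2)
    by simp
  then obtain \<psi> where \<psi>: "\<psi> \<in> Hom C (pcar D) (pcar (bc res))" "pmap (bc res) \<cdot> \<psi> = pmap D" "bc_snd res \<cdot> \<psi> = \<alpha>"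
    using pullback_lift[OF pP D_split(1) \<alpha>(1)] by blast
  have "bc_map res B res_incl \<cdot> \<psi> = n"
  proof (rule pullback_eqI[OF pB])
    show "bc_map res B res_incl \<cdot> \<psi> \<in> Hom C (pcar D) (pcar (bc B))" using comp_in_Hom \<psi> u by blast
    show "n \<in> Hom C (pcar D) (pcar (bc B))" by (rule n_hom(1))
    show "pmap (bc B) \<cdot> bc_map res B res_incl \<cdot> \<psi> = pmap (bc B) \<cdot> n"
      using comp_assoc[OF \<psi>(1) u(1) dB(3)] u \<psi> n_hom by simp
    show "bc_snd B \<cdot> bc_map res B res_incl \<cdot> \<psi> = bc_snd B \<cdot> n"
      using comp_assoc[OF \<psi>(1) u(1) dB(4)] u comp_assoc[OF \<psi>(1) dP(4) dA(3)] \<psi> \<alpha> by simp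
  qed
  then show ?thesis using \<psi>(1) by blast
qed

lemma sub_equiv_bc_res: "sub_equiv C Y (bc res, bc_map res B res_incl) (D, n)"
  using bc_res_factors_through_n n_factors_through_bc_res
    sub_equiv_of_factorizations[OF bc_subrep[OF res_subrep] sub]
  by auto

end

context sigma_base_change
begin

abbreviation "subrep\<^sub>Z B \<equiv> subrep C Z (sig_ob Sig Z) B"
abbreviation "subrep\<^sub>Y B \<equiv> subrep C Y (sig_ob Sig Y) (bc B)"
abbreviation "class\<^sub>Z B \<equiv> sub_class Z (sig_ob Sig Z) B"
abbreviation "class\<^sub>Y B \<equiv> sub_class Y (sig_ob Sig Y) (bc B)"

lemma bc_subrep_surj:
  assumes B: "pt_ob C Z B" and r: "(D, n) \<in> subrep\<^sub>Y B"
  shows "\<exists>A m. (A, m) \<in> subrep\<^sub>Z B \<and> sub_equiv C Y (bc A, bc_map A B m) (D, n)"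
proof -
  interpret sig_subobject_of_bc C Y Z g t Sig B D n
    using B r by unfold_locales
  show ?thesis using res_subrep sub_equiv_bc_res by blast
qed

lemma bc_sub_sub_class:
  assumes r: "(A, m) \<in> subrep\<^sub>Z B"
  shows "bc_sub C Sig Y Z g B (class\<^sub>Z B (A, m)) = class\<^sub>Y B (bc A, bc_map A B m)"
proof
  show "bc_sub C Sig Y Z g B (class\<^sub>Z B (A, m)) \<subseteq> class\<^sub>Y B (bc A, bc_map A B m)"
  proof
    fix r' assume "r' \<in> bc_sub C Sig Y Z g B (class\<^sub>Z B (A, m))"
    then obtain A' m' where r': "r' \<in> subrep\<^sub>Y B" and e': "sub_equiv C Z (A', m') (A, m)"
      and e: "sub_equiv C Y r' (bc A', bc_map A' B m')"
      unfolding bc_sub_def sub_class_def by blast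
    have "sub_equiv C Y r' (bc A, bc_map A B m)"
      using sub_equiv_trans[OF bc_subrep[OF r] e sub_equiv_bc[OF r e']] .
    then show "r' \<in> class\<^sub>Y B (bc A, bc_map A B m)" unfolding sub_class_def using r' by blast
  qed
  have "(A, m) \<in> class\<^sub>Z B (A, m)" unfolding sub_class_def using r sub_equiv_refl[OF r] by blast
  then show "class\<^sub>Y B (bc A, bc_map A B m) \<subseteq> bc_sub C Sig Y Z g B (class\<^sub>Z B (A, m))"
    unfolding bc_sub_def sub_class_def by blast
qed

lemma bc_sub_bij:
  assumes B: "pt_ob C Z B"
  shows "bij_betw (bc_sub C Sig Y Z g B) (subobjects C Z (sig_ob Sig Z) B)
           (subobjects C Y (sig_ob Sig Y) (bc B))"
  unfolding bij_betw_def subobjects_eq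
proof
  show "inj_on (bc_sub C Sig Y Z g B) (class\<^sub>Z B ` subrep\<^sub>Z B)"
  proof (rule inj_onI)
    fix c1 c2 assume "c1 \<in> class\<^sub>Z B ` subrep\<^sub>Z B" "c2 \<in> class\<^sub>Z B ` subrep\<^sub>Z B"
      and e: "bc_sub C Sig Y Z g B c1 = bc_sub C Sig Y Z g B c2"
    then obtain A1 m1 A2 m2 where r1: "(A1, m1) \<in> subrep\<^sub>Z B" "c1 = class\<^sub>Z B (A1, m1)"
      and r2: "(A2, m2) \<in> subrep\<^sub>Z B" "c2 = class\<^sub>Z B (A2, m2)" by auto
    have "sub_equiv C Y (bc A1, bc_map A1 B m1) (bc A2, bc_map A2 B m2)"
      using e sub_class_eq_iff[OF bc_subrep[OF r1(1)] bc_subrep[OF r2(1)]]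
      unfolding r1(2) r2(2) bc_sub_sub_class[OF r1(1)] bc_sub_sub_class[OF r2(1)] by blast
    then show "c1 = c2"
      unfolding r1(2) r2(2) using sub_equiv_bc_reflect[OF r1(1) r2(1)] sub_class_eq_iff[OF r1(1) r2(1)] by blast
  qed
  show "bc_sub C Sig Y Z g B ` class\<^sub>Z B ` subrep\<^sub>Z B = class\<^sub>Y B ` subrep\<^sub>Y B"
  proof (intro equalityI subsetI)
    fix c assume "c \<in> bc_sub C Sig Y Z g B ` class\<^sub>Z B ` subrep\<^sub>Z B"
    then obtain A m where r: "(A, m) \<in> subrep\<^sub>Z B" and c: "c = bc_sub C Sig Y Z g B (class\<^sub>Z B (A, m))"
      by auto
    show "c \<in> class\<^sub>Y B ` subrep\<^sub>Y B" unfolding c bc_sub_sub_class[OF r] using bc_subrep[OF r] by (rule imageI)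
  next
    fix c assume "c \<in> class\<^sub>Y B ` subrep\<^sub>Y B"
    then obtain D n where r: "(D, n) \<in> subrep\<^sub>Y B" and c: "c = class\<^sub>Y B (D, n)" by auto
    obtain A m where a: "(A, m) \<in> subrep\<^sub>Z B" "sub_equiv C Y (bc A, bc_map A B m) (D, n)"
      using bc_subrep_surj[OF B r] by blast
    then have "c = bc_sub C Sig Y Z g B (class\<^sub>Z B (A, m))"
      unfolding c bc_sub_sub_class[OF a(1)] using sub_class_eq_iff[OF bc_subrep[OF a(1)] r] by simp
    then show "c \<in> bc_sub C Sig Y Z g B ` class\<^sub>Z B ` subrep\<^sub>Z B" using a(1) by blast
  qed
qed

end

theorem theorem4p5:
  fixes C :: "('o,'m) cat"
    and Sig :: "'o \<Rightarrow> 'o \<Rightarrow> 'm \<Rightarrow> 'm \<Rightarrow> bool"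
    and Y Z :: 'o and g t :: 'm
  assumes "finitely_complete C"
    and "fibrational C Sig"
    and "sigma_maltsev C Sig"
    and "split_epi C Y Z g t"
  shows "(\<forall>A B h. pt_ob C Z A \<longrightarrow> sig_ob Sig Z A \<longrightarrow> pt_ob C Z B \<longrightarrow>
            h \<in> pt_hom C Y (bc_ob C Y Z g A) (bc_ob C Y Z g B) \<longrightarrow>
            (\<exists>!k. k \<in> pt_hom C Z A B \<and> bc_hom C Y Z g A B k = h))
       \<and> (\<forall>A B m. pt_mono C Z A B m \<longrightarrow>
            pt_mono C Y (bc_ob C Y Z g A) (bc_ob C Y Z g B) (bc_hom C Y Z g A B m))
       \<and> (\<forall>B. pt_ob C Z B \<longrightarrow>
            bij_betw (bc_sub C Sig Y Z g B)
              (subobjects C Z (sig_ob Sig Z) B)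
              (subobjects C Y (sig_ob Sig Y) (bc_ob C Y Z g B)))"
proof -
  interpret sigma_base_change C Y Z g t Sig
    using assms by unfold_locales
  show ?thesis using bc_full_faithful bc_hom_pt_mono bc_sub_bij by blast
qed

end
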